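(* Suppose that $(s,p)$ satisfies either (i) $s>\frac12-\frac1p$, $p>2$, or (ii) $s\ge0$, $p=2$. Then there exists $\delta_2>0$ such that if a smooth mean-zero function $\phi$ on $\mathbb{T}$ satisfies $\|\phi\|_{\mathcal{F}L_0^{s,p}(\mathbb{T})}\le\delta_2$, then there exists a smooth global solution $u$ of $\partial_tu=i\partial_x^2u+u\partial_xu$ on $\mathbb{R}\times\mathbb{T}$ with $u|_{t=0}=\phi$, and there is a constant $C<\infty$ depending only on $\sup_{x\in\mathbb{T}}|\mathcal{J}(\phi)(x)|$ and $\|\phi\|_{\mathcal{F}L_0^{s,p}}$ such that $\|u(t)\|_{L^2(\mathbb{T})}\le C$ for all $t\in\mathbb{R}$.
   Context: $\mathbb{T}=\mathbb{R}/(2\pi\mathbb{Z})$, $f_k=\frac1{2\pi}\int_{\mathbb{T}}f(x)e^{-ikx}dx$, $\mathbb{Z}_0=\mathbb{Z}\setminus\{0\}$. $\mathcal{F}L_0^{s,p}(\mathbb{T})$ is the space of mean-zero functions with norm $\||k|^sf_k\|_{\ell^p(\mathbb{Z}_0)}$. $\mathcal{J}(\phi)$ is the mean-zero primitive of $\phi$: $\mathcal{J}(\phi)_k=\phi_k/(ik)$ for $k\ne0$, $\mathcal{J}(\phi)_0=0$. *)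

theory Defs
  imports "HOL-Analysis.Analysis"
begin

text \<open>Infinitely (Frechet) differentiable functions on a real normed vector space:
  f is smooth iff it lies in some class of everywhere-differentiable functions that is
  closed under taking directional derivatives (hence all derivatives of all orders exist).\<close>
definition smooth :: "('a::real_normed_vector \<Rightarrow> 'b::real_normed_vector) \<Rightarrow> bool" where
  "smooth f \<longleftrightarrow> (\<exists>S. f \<in> S \<and>
     (\<forall>g\<in>S. \<exists>D. (\<forall>z. (g has_derivative D z) (at z)) \<and> (\<forall>v. (\<lambda>z. D z v) \<in> S)))"

text \<open>Functions on the torus T = R/(2 pi Z), represented as 2 pi-periodic functions on R.\<close>
definition periodic2pi :: "(real \<Rightarrow> 'b) \<Rightarrow> bool" where
  "periodic2pi f \<longleftrightarrow> (\<forall>x. f (x + 2 * pi) = f x)"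

definition fcoeff :: "(real \<Rightarrow> complex) \<Rightarrow> int \<Rightarrow> complex" where
  "fcoeff f k = complex_of_real (1 / (2 * pi)) *
      integral {0..2 * pi} (\<lambda>x. f x * exp (- \<i> * of_int k * of_real x))"

definition mean_zero :: "(real \<Rightarrow> complex) \<Rightarrow> bool" where
  "mean_zero f \<longleftrightarrow> fcoeff f 0 = 0"

definition FL_norm :: "real \<Rightarrow> real \<Rightarrow> (real \<Rightarrow> complex) \<Rightarrow> real" where
  "FL_norm s p f =
     (\<Sum>\<^sub>\<infinity>k\<in>UNIV - {0::int}. (\<bar>real_of_int k\<bar> powr s * cmod (fcoeff f k)) powr p) powr (1 / p)"

text \<open>Mean-zero primitive J(phi), defined on the Fourier side: J(phi)_k = phi_k/(ik), J(phi)_0 = 0.\<close>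
definition Jprim :: "(real \<Rightarrow> complex) \<Rightarrow> real \<Rightarrow> complex" where
  "Jprim f x = (\<Sum>\<^sub>\<infinity>k\<in>UNIV - {0::int}.
      fcoeff f k / (\<i> * of_int k) * exp (\<i> * of_int k * of_real x))"

definition L2_norm :: "(real \<Rightarrow> complex) \<Rightarrow> real" where
  "L2_norm f = sqrt (integral {0..2 * pi} (\<lambda>x. (cmod (f x))\<^sup>2))"

definition smooth_global_solution :: "(real \<Rightarrow> real \<Rightarrow> complex) \<Rightarrow> bool" where
  "smooth_global_solution u \<longleftrightarrow>
     smooth (\<lambda>(t, x). u t x) \<and> (\<forall>t. periodic2pi (u t)) \<and>
     (\<forall>t x. vector_derivative (\<lambda>\<tau>. u \<tau> x) (at t) =
        \<i> * vector_derivative (\<lambda>y. vector_derivative (\<lambda>z. u t z) (at y)) (at x)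
        + u t x * vector_derivative (\<lambda>y. u t y) (at x))"

end

theory Submission
  imports Defs "HOL-Library.Nat_Bijection"
begin

text \<open>The equation u_t = i u_xx + u u_x is linearised by the Hopf-Cole (gauge) transform
  u = 2 i w_x / w, where w solves the free Schroedinger equation w_t = i w_xx.  For the datum
  w(0) = exp (-(i/2) J(phi)) the transform of w starts at phi, and w is the explicit Fourier
  series of free waves b_k exp (i (k x - k^2 t)), smooth on R x T.  The transform stays defined
  as long as w does not vanish: uniformly in t, |w(t, x) - b_0| is at most the l^2 norm of
  (k b_k) times (sum of 1/k^2)^(1/2), and |b_0| is close to |w(0, 0)| >= exp (-M/2) with
  M = sup |J(phi)|.  All these quantities are controlled by the L^2 norm of phi, hence by its
  FL^(s,p) norm (for p > 2 each Fourier mode is split according to its size, which needs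
  s > 1/2 - 1/p).  Once |w| >= 1/2, the L^2 norm of u(t) is at most four times that of
  w_x(t), which is conserved.\<close>

section \<open>Sums over the integers\<close>

lemma int_decode_growth: "real n + 1 \<le> 2 * (1 + \<bar>real_of_int (int_decode n)\<bar>)"
proof -
  have "sum_decode n = (if even n then Inl (n div 2) else Inr (n div 2))"
    by (simp add: sum_decode_def)
  then show ?thesis
    by (cases "even n") (auto simp: int_decode_def elim!: evenE oddE)
qed

lemma summable_on_int_iff_summable_int_decode:
  fixes g :: "int \<Rightarrow> real"
  assumes "\<And>k. g k \<ge> 0"
  shows "g summable_on UNIV \<longleftrightarrow> summable (\<lambda>n. g (int_decode n))"
proof -
  have "g summable_on range int_decode \<longleftrightarrow> (g \<circ> int_decode) summable_on UNIV"
    by (rule summable_on_reindex) (simp add: inj_int_decode)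
  then have "g summable_on UNIV \<longleftrightarrow> (g \<circ> int_decode) summable_on UNIV"
    by (simp add: surj_int_decode)
  also have "\<dots> \<longleftrightarrow> summable (\<lambda>n. g (int_decode n))"
    using assms by (subst summable_on_UNIV_nonneg_real_iff) (auto simp: o_def)
  finally show ?thesis .
qed

lemma sums_infsum_int_decode:
  fixes g :: "int \<Rightarrow> 'a::banach"
  assumes "(\<lambda>k. norm (g k)) summable_on UNIV"
  shows "(\<lambda>n. g (int_decode n)) sums (\<Sum>\<^sub>\<infinity>k. g k)"
proof -
  have "g summable_on UNIV"
    using assms abs_summable_summable by blast
  then have "(g has_sum (\<Sum>\<^sub>\<infinity>k. g k)) (range int_decode)"
    by (simp add: surj_int_decode has_sum_infsum)
  then have "((g \<circ> int_decode) has_sum (\<Sum>\<^sub>\<infinity>k. g k)) UNIV"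
    by (subst (asm) has_sum_reindex) (auto intro: inj_int_decode)
  then show ?thesis
    by (auto dest: has_sum_imp_sums simp: o_def)
qed

lemma divide_powr_neg: "(x / c) powr (- \<sigma>) = c powr \<sigma> * x powr (- \<sigma>)" for x c \<sigma> :: real
  unfolding powr_minus powr_divide inverse_divide by (simp add: divide_inverse)

lemma summable_on_one_plus_abs_int_powr:
  assumes "\<sigma> > 1"
  shows "(\<lambda>k::int. (1 + \<bar>real_of_int k\<bar>) powr (- \<sigma>)) summable_on UNIV"
proof (subst summable_on_int_iff_summable_int_decode)
  have "summable (\<lambda>n. real (Suc n) powr (- \<sigma>))"
    using summable_real_powr_iff[of "- \<sigma>"] assms by (subst summable_Suc_iff) simp
  then have "summable (\<lambda>n. 2 powr \<sigma> * real (Suc n) powr (- \<sigma>))"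
    by (rule summable_mult)
  then show "summable (\<lambda>n. (1 + \<bar>real_of_int (int_decode n)\<bar>) powr (- \<sigma>))"
  proof (rule summable_comparison_test')
    fix n :: nat assume "n \<ge> 0"
    have le: "real (Suc n) / 2 \<le> 1 + \<bar>real_of_int (int_decode n)\<bar>"
      using int_decode_growth[of n] by simp
    have "(1 + \<bar>real_of_int (int_decode n)\<bar>) powr (- \<sigma>) \<le> (real (Suc n) / 2) powr (- \<sigma>)"
      by (rule powr_mono2'[OF _ _ le]) (use assms in auto)
    then show "norm ((1 + \<bar>real_of_int (int_decode n)\<bar>) powr (- \<sigma>)) \<le> 2 powr \<sigma> * real (Suc n) powr (- \<sigma>)"
      by (simp only: real_norm_def abs_of_nonneg powr_ge_zero divide_powr_neg)
  qed
qed auto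

lemma summable_on_abs_int_powr:
  assumes "\<sigma> > 1"
  shows "(\<lambda>k::int. \<bar>real_of_int k\<bar> powr (- \<sigma>)) summable_on UNIV"
proof (rule summable_on_comparison_test)
  show "(\<lambda>k::int. 2 powr \<sigma> * (1 + \<bar>real_of_int k\<bar>) powr (- \<sigma>)) summable_on UNIV"
    by (intro summable_on_cmult_right summable_on_one_plus_abs_int_powr assms)
  fix k :: int
  show "\<bar>real_of_int k\<bar> powr (- \<sigma>) \<le> 2 powr \<sigma> * (1 + \<bar>real_of_int k\<bar>) powr (- \<sigma>)"
  proof (cases "k = 0")
    case False
    then have le: "(1 + \<bar>real_of_int k\<bar>) / 2 \<le> \<bar>real_of_int k\<bar>" by simp
    have "\<bar>real_of_int k\<bar> powr (- \<sigma>) \<le> ((1 + \<bar>real_of_int k\<bar>) / 2) powr (- \<sigma>)"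
      by (rule powr_mono2'[OF _ _ le]) (use assms False in auto)
    then show ?thesis by (simp only: divide_powr_neg)
  qed simp
qed simp

lemma summable_on_inverse_abs_int_squared:
  "(\<lambda>k::int. (1 / \<bar>real_of_int k\<bar>)\<^sup>2) summable_on UNIV"
proof -
  have eq: "(1 / \<bar>real_of_int k\<bar>)\<^sup>2 = \<bar>real_of_int k\<bar> powr (- 2)" for k :: int
  proof (cases "k = 0")
    case False
    then show ?thesis by (simp add: powr_minus power_one_over inverse_eq_divide)
  qed simp
  have "(\<lambda>k::int. \<bar>real_of_int k\<bar> powr (- 2)) summable_on UNIV"
    by (rule summable_on_abs_int_powr) simp
  then show ?thesis unfolding eq .
qed

section \<open>Rapidly decreasing coefficient sequences\<close>

definition rapid_decay :: "(int \<Rightarrow> complex) \<Rightarrow> bool" where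
  "rapid_decay a \<longleftrightarrow> (\<forall>m::nat. \<exists>B. \<forall>k. (1 + \<bar>real_of_int k\<bar>)^m * cmod (a k) \<le> B)"

lemma rapid_decay_weighted_summable:
  assumes "rapid_decay a"
  shows "(\<lambda>k. (1 + \<bar>real_of_int k\<bar>)^m * cmod (a k)) summable_on UNIV"
proof -
  obtain B where B: "\<And>k. (1 + \<bar>real_of_int k\<bar>)^(m + 2) * cmod (a k) \<le> B"
    using assms unfolding rapid_decay_def by blast
  have "(\<lambda>k::int. B * (1 + \<bar>real_of_int k\<bar>) powr (- 2)) summable_on UNIV"
    by (intro summable_on_cmult_right summable_on_one_plus_abs_int_powr) simp
  then show ?thesis
  proof (rule summable_on_comparison_test)
    fix k :: int
    have "(1 + \<bar>real_of_int k\<bar>)^m * cmod (a k) * (1 + \<bar>real_of_int k\<bar>)^2 \<le> B"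
      using B[of k] by (simp add: power_add power2_eq_square mult_ac)
    then show "(1 + \<bar>real_of_int k\<bar>)^m * cmod (a k) \<le> B * (1 + \<bar>real_of_int k\<bar>) powr (- 2)"
      by (simp add: powr_minus powr_realpow divide_inverse[symmetric] pos_le_divide_eq)
  qed simp
qed

lemma rapid_decay_norm_summable: "rapid_decay a \<Longrightarrow> (\<lambda>k. cmod (a k)) summable_on UNIV"
  using rapid_decay_weighted_summable[of a 0] by simp

lemma rapid_decay_square_summable:
  assumes "rapid_decay a"
  shows "(\<lambda>k. (cmod (a k))\<^sup>2) summable_on A"
proof -
  obtain B where B: "\<And>k. (1 + \<bar>real_of_int k\<bar>)^0 * cmod (a k) \<le> B"
    using assms unfolding rapid_decay_def by blast
  have "(\<lambda>k. B * cmod (a k)) summable_on UNIV"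
    by (intro summable_on_cmult_right rapid_decay_norm_summable assms)
  then have "(\<lambda>k. (cmod (a k))\<^sup>2) summable_on UNIV"
    by (rule summable_on_comparison_test) (use B in \<open>auto simp: power2_eq_square intro: mult_right_mono\<close>)
  then show ?thesis by (rule summable_on_subset_banach) auto
qed

lemma rapid_decay_dominated:
  assumes "rapid_decay a" "\<And>k. cmod (b k) \<le> (1 + \<bar>real_of_int k\<bar>)^j * C * cmod (a k)"
  shows "rapid_decay b"
  unfolding rapid_decay_def
proof
  fix m
  obtain B where B: "\<And>k. (1 + \<bar>real_of_int k\<bar>)^(m + j) * cmod (a k) \<le> B"
    using assms(1) unfolding rapid_decay_def by blast
  have "(1 + \<bar>real_of_int k\<bar>)^m * cmod (b k) \<le> \<bar>C\<bar> * B" for k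
  proof -
    have "(1 + \<bar>real_of_int k\<bar>)^m * cmod (b k) \<le> (1 + \<bar>real_of_int k\<bar>)^m * ((1 + \<bar>real_of_int k\<bar>)^j * C * cmod (a k))"
      by (intro mult_left_mono assms(2)) auto
    also have "\<dots> = C * ((1 + \<bar>real_of_int k\<bar>)^(m + j) * cmod (a k))"
      by (simp add: power_add mult_ac)
    also have "\<dots> \<le> \<bar>C\<bar> * B"
      by (intro mult_mono B) auto
    finally show ?thesis .
  qed
  then show "\<exists>B. \<forall>k. (1 + \<bar>real_of_int k\<bar>)^m * cmod (b k) \<le> B" by blast
qed

lemma rapid_decay_add:
  assumes "rapid_decay a" "rapid_decay b"
  shows "rapid_decay (\<lambda>k. a k + b k)"
  unfolding rapid_decay_def
proof
  fix m
  obtain A B where A: "\<And>k. (1 + \<bar>real_of_int k\<bar>)^m * cmod (a k) \<le> A"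
    and B: "\<And>k. (1 + \<bar>real_of_int k\<bar>)^m * cmod (b k) \<le> B"
    using assms unfolding rapid_decay_def by meson
  have "(1 + \<bar>real_of_int k\<bar>)^m * cmod (a k + b k) \<le> A + B" for k
  proof -
    have "(1 + \<bar>real_of_int k\<bar>)^m * cmod (a k + b k) \<le> (1 + \<bar>real_of_int k\<bar>)^m * (cmod (a k) + cmod (b k))"
      by (intro mult_left_mono norm_triangle_ineq) auto
    also have "\<dots> \<le> A + B" using A[of k] B[of k] by (simp add: distrib_left)
    finally show ?thesis .
  qed
  then show "\<exists>B. \<forall>k. (1 + \<bar>real_of_int k\<bar>)^m * cmod (a k + b k) \<le> B" by blast
qed

lemma rapid_decay_cmult: "rapid_decay a \<Longrightarrow> rapid_decay (\<lambda>k. c * a k)"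
  by (rule rapid_decay_dominated[where j=0 and C="cmod c"]) (auto simp: norm_mult)

section \<open>Smooth functions\<close>

inductive_set generated_algebra :: "('a::real_normed_vector \<Rightarrow> complex) set \<Rightarrow> ('a \<Rightarrow> complex) set"
  for B where
  base: "g \<in> B \<Longrightarrow> g \<in> generated_algebra B"
| const: "(\<lambda>z. c) \<in> generated_algebra B"
| add: "f \<in> generated_algebra B \<Longrightarrow> g \<in> generated_algebra B \<Longrightarrow> (\<lambda>z. f z + g z) \<in> generated_algebra B"
| mult: "f \<in> generated_algebra B \<Longrightarrow> g \<in> generated_algebra B \<Longrightarrow> (\<lambda>z. f z * g z) \<in> generated_algebra B"

definition has_derivatives_in :: "('a::real_normed_vector \<Rightarrow> 'b::real_normed_vector) set \<Rightarrow> ('a \<Rightarrow> 'b) \<Rightarrow> bool" where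
  "has_derivatives_in S g \<longleftrightarrow> (\<exists>D. (\<forall>z. (g has_derivative D z) (at z)) \<and> (\<forall>v. (\<lambda>z. D z v) \<in> S))"

definition smooth_class :: "('a::real_normed_vector \<Rightarrow> 'b::real_normed_vector) set \<Rightarrow> bool" where
  "smooth_class S \<longleftrightarrow> (\<forall>g\<in>S. has_derivatives_in S g)"

lemma smooth_iff_smooth_class: "smooth f \<longleftrightarrow> (\<exists>S. f \<in> S \<and> smooth_class S)"
  unfolding smooth_def smooth_class_def has_derivatives_in_def by blast

lemma has_derivatives_in_mono: "has_derivatives_in S g \<Longrightarrow> S \<subseteq> T \<Longrightarrow> has_derivatives_in T g"
  unfolding has_derivatives_in_def by blast

lemma smooth_class_Un: "smooth_class S \<Longrightarrow> smooth_class T \<Longrightarrow> smooth_class (S \<union> T)"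
  unfolding smooth_class_def by (blast intro: has_derivatives_in_mono)

lemma smooth_class_generated_algebra_if_base:
  assumes "\<And>g. g \<in> B \<Longrightarrow> has_derivatives_in (generated_algebra B) g"
  shows "smooth_class (generated_algebra B)"
  unfolding smooth_class_def
proof
  fix f assume "f \<in> generated_algebra B"
  then show "has_derivatives_in (generated_algebra B) f"
  proof induction
    case (base g) then show ?case by (rule assms)
  next
    case (const c)
    show ?case unfolding has_derivatives_in_def
      by (rule exI[of _ "\<lambda>z v. 0"]) (auto intro: generated_algebra.const)
  next
    case (add f g)
    obtain Df where "\<And>z. (f has_derivative Df z) (at z)" "\<And>v. (\<lambda>z. Df z v) \<in> generated_algebra B"
      using add.IH(1) unfolding has_derivatives_in_def by blast
    moreover obtain Dg where "\<And>z. (g has_derivative Dg z) (at z)" "\<And>v. (\<lambda>z. Dg z v) \<in> generated_algebra B"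
      using add.IH(2) unfolding has_derivatives_in_def by blast
    ultimately show ?case unfolding has_derivatives_in_def
      by (intro exI[of _ "\<lambda>z v. Df z v + Dg z v"]) (auto intro!: has_derivative_add generated_algebra.add)
  next
    case (mult f g)
    obtain Df where "\<And>z. (f has_derivative Df z) (at z)" "\<And>v. (\<lambda>z. Df z v) \<in> generated_algebra B"
      using mult.IH(1) unfolding has_derivatives_in_def by blast
    moreover obtain Dg where "\<And>z. (g has_derivative Dg z) (at z)" "\<And>v. (\<lambda>z. Dg z v) \<in> generated_algebra B"
      using mult.IH(2) unfolding has_derivatives_in_def by blast
    ultimately show ?case unfolding has_derivatives_in_def
      by (intro exI[of _ "\<lambda>z v. f z * Dg z v + Df z v * g z"])
         (auto intro!: has_derivative_mult generated_algebra.add generated_algebra.mult mult.hyps)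
  qed
qed

lemma smooth_class_generated_algebra: "smooth_class B \<Longrightarrow> smooth_class (generated_algebra B)"
  by (rule smooth_class_generated_algebra_if_base)
     (auto simp: smooth_class_def intro: has_derivatives_in_mono generated_algebra.base)

lemma smooth_by_derivative:
  assumes S: "smooth_class S"
    and h: "\<And>z. (h has_derivative D z) (at z)"
    and D: "\<And>v. (\<lambda>z. D z v) \<in> generated_algebra (insert h S)"
  shows "smooth h"
proof -
  have "has_derivatives_in (generated_algebra (insert h S)) g" if "g \<in> insert h S" for g
  proof (cases "g = h")
    case True
    then show ?thesis unfolding has_derivatives_in_def using h D by blast
  next
    case False
    then have "has_derivatives_in S g" using that S unfolding smooth_class_def by blast
    moreover have "S \<subseteq> generated_algebra (insert h S)" by (auto intro: generated_algebra.base)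
    ultimately show ?thesis by (rule has_derivatives_in_mono)
  qed
  then have "smooth_class (generated_algebra (insert h S))"
    by (rule smooth_class_generated_algebra_if_base)
  moreover have "h \<in> generated_algebra (insert h S)" by (auto intro: generated_algebra.base)
  ultimately show ?thesis unfolding smooth_iff_smooth_class by blast
qed

lemma smooth_const: "smooth (\<lambda>z::'a::real_normed_vector. c::complex)"
  by (rule smooth_by_derivative[of "{}" _ "\<lambda>z v. 0"])
     (auto simp: smooth_class_def intro: generated_algebra.const)

lemma smooth_mult:
  fixes f g :: "'a::real_normed_vector \<Rightarrow> complex"
  assumes "smooth f" "smooth g"
  shows "smooth (\<lambda>z. f z * g z)"
proof -
  obtain S T where S: "f \<in> S" "smooth_class S" and T: "g \<in> T" "smooth_class T"
    using assms unfolding smooth_iff_smooth_class by blast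
  then have "smooth_class (generated_algebra (S \<union> T))"
    by (intro smooth_class_generated_algebra smooth_class_Un)
  moreover have "(\<lambda>z. f z * g z) \<in> generated_algebra (S \<union> T)"
    using S(1) T(1) by (intro generated_algebra.mult generated_algebra.base) auto
  ultimately show ?thesis unfolding smooth_iff_smooth_class by blast
qed

lemma smooth_cmult: "smooth f \<Longrightarrow> smooth (\<lambda>z. c * f z)"
  for f :: "'a::real_normed_vector \<Rightarrow> complex"
  by (rule smooth_mult[OF smooth_const])

lemma smooth_exp:
  fixes f :: "'a::real_normed_vector \<Rightarrow> complex"
  assumes "smooth f"
  shows "smooth (\<lambda>z. exp (f z))"
proof -
  obtain S where S: "f \<in> S" "smooth_class S"
    using assms unfolding smooth_iff_smooth_class by blast
  then obtain D where D: "\<And>z. (f has_derivative D z) (at z)" "\<And>v. (\<lambda>z. D z v) \<in> S"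
    unfolding smooth_class_def has_derivatives_in_def by blast
  show ?thesis
  proof (rule smooth_by_derivative[OF S(2)])
    show "((\<lambda>z. exp (f z)) has_derivative (\<lambda>v. exp (f z) * D z v)) (at z)" for z
      using has_derivative_compose[OF D(1) has_field_derivative_imp_has_derivative[OF DERIV_exp]]
      by (simp add: mult.commute)
    show "(\<lambda>z. exp (f z) * D z v) \<in> generated_algebra (insert (\<lambda>z. exp (f z)) S)" for v
      using D(2)[of v] by (intro generated_algebra.mult) (auto intro: generated_algebra.base)
  qed
qed

lemma smooth_inverse:
  fixes f :: "'a::real_normed_vector \<Rightarrow> complex"
  assumes "smooth f" "\<And>z. f z \<noteq> 0"
  shows "smooth (\<lambda>z. inverse (f z))"
proof -
  obtain S where S: "f \<in> S" "smooth_class S"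
    using assms unfolding smooth_iff_smooth_class by blast
  then obtain D where D: "\<And>z. (f has_derivative D z) (at z)" "\<And>v. (\<lambda>z. D z v) \<in> S"
    unfolding smooth_class_def has_derivatives_in_def by blast
  show ?thesis
  proof (rule smooth_by_derivative[OF S(2)])
    show "((\<lambda>z. inverse (f z)) has_derivative
        (\<lambda>v. (-1) * (inverse (f z) * D z v * inverse (f z)))) (at z)" for z
      using Deriv.has_derivative_inverse[OF assms(2) D(1)] by simp
    show "(\<lambda>z. (-1) * (inverse (f z) * D z v * inverse (f z)))
        \<in> generated_algebra (insert (\<lambda>z. inverse (f z)) S)" (is "_ \<in> ?A") for v
    proof -
      have "(\<lambda>z. inverse (f z)) \<in> ?A" "(\<lambda>z. D z v) \<in> ?A"
        using D(2)[of v] by (auto intro: generated_algebra.base)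
      then show ?thesis
        by (intro generated_algebra.mult generated_algebra.const) auto
    qed
  qed
qed

lemma smooth_compose_linear:
  fixes f :: "'a::real_normed_vector \<Rightarrow> complex" and L :: "'b::real_normed_vector \<Rightarrow> 'a"
  assumes "smooth f" "bounded_linear L"
  shows "smooth (\<lambda>z. f (L z))"
proof -
  obtain S where S: "f \<in> S" "smooth_class S"
    using assms(1) unfolding smooth_iff_smooth_class by blast
  let ?T = "(\<lambda>g z. g (L z)) ` S"
  have comp: "has_derivatives_in ?T (\<lambda>z. g (L z))" if "g \<in> S" for g
  proof -
    obtain D where D: "\<And>z. (g has_derivative D z) (at z)" "\<And>v. (\<lambda>z. D z v) \<in> S"
      using S(2) \<open>g \<in> S\<close> unfolding smooth_class_def has_derivatives_in_def by blast
    have "((\<lambda>z. g (L z)) has_derivative (\<lambda>v. D (L z) (L v))) (at z)" for z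
      using has_derivative_compose[OF bounded_linear_imp_has_derivative[OF assms(2)] D(1)]
      by (simp add: o_def)
    moreover have "(\<lambda>z. D (L z) (L v)) \<in> ?T" for v
      using D(2)[of "L v"] by (intro image_eqI[where x="\<lambda>z. D z (L v)"]) auto
    ultimately show ?thesis unfolding has_derivatives_in_def
      by (intro exI[where x="\<lambda>z v. D (L z) (L v)"]) simp
  qed
  have "smooth_class ?T"
    unfolding smooth_class_def using comp by auto
  moreover have "(\<lambda>z. f (L z)) \<in> ?T" using S(1) by (rule imageI)
  ultimately show ?thesis unfolding smooth_iff_smooth_class by (intro exI[of _ ?T] conjI)
qed

lemma smooth_real_has_vector_derivative:
  fixes f :: "real \<Rightarrow> complex"
  assumes "smooth f"
  obtains f' where "\<And>x. (f has_vector_derivative f' x) (at x)" "smooth f'"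
proof -
  obtain S where S: "f \<in> S" "smooth_class S"
    using assms unfolding smooth_iff_smooth_class by blast
  then obtain D where D: "\<And>z. (f has_derivative D z) (at z)" "\<And>v. (\<lambda>z. D z v) \<in> S"
    unfolding smooth_class_def has_derivatives_in_def by blast
  have "D x h = h *\<^sub>R D x 1" for x h
  proof -
    have "D x (h *\<^sub>R 1) = h *\<^sub>R D x 1"
      by (rule linear_scale[OF has_derivative_linear[OF D(1)]])
    then show ?thesis by simp
  qed
  then have "(f has_vector_derivative D x 1) (at x)" for x
    unfolding has_vector_derivative_def using D(1)[of x] by (metis (no_types, lifting) ext)
  moreover have "smooth (\<lambda>z. D z 1)"
    unfolding smooth_iff_smooth_class using D(2)[of 1] S(2) by blast
  ultimately show ?thesis by (rule that)
qed

lemma smooth_differentiable: "smooth f \<Longrightarrow> f differentiable at z"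
  unfolding smooth_def differentiable_def by blast

lemma smooth_continuous_on: "smooth f \<Longrightarrow> continuous_on A f"
  by (intro continuous_at_imp_continuous_on ballI differentiable_imp_continuous_within
      smooth_differentiable)

section \<open>Free Schroedinger waves\<close>

lemma has_derivative_series_dominated:
  fixes f :: "nat \<Rightarrow> 'a::real_normed_vector \<Rightarrow> 'b::banach"
  assumes f: "\<And>n z. (f n has_derivative f' n z) (at z)"
    and F: "\<And>z. (\<lambda>n. f n z) sums F z"
    and F': "\<And>z v. (\<lambda>n. f' n z v) sums F' z v"
    and bound: "\<And>n z v. norm (f' n z v) \<le> c n * norm v"
    and c: "summable c"
  shows "(F has_derivative F' z) (at z)"
proof -
  have unif: "\<forall>\<^sub>F n in sequentially. \<forall>x\<in>UNIV. \<forall>h. norm (sum (\<lambda>i. f' i x h) {..<n} - F' x h) \<le> e * norm h"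
    if e: "e > 0" for e
  proof -
    obtain N where N: "\<And>n. n \<ge> N \<Longrightarrow> norm (\<Sum>i. c (i + n)) < e"
      using suminf_exist_split[OF e c] by blast
    have "norm (sum (\<lambda>i. f' i x h) {..<n} - F' x h) \<le> e * norm h" if n: "n \<ge> N" for n x h
    proof -
      have s: "summable (\<lambda>i. f' i x h)" using F' sums_summable by blast
      have cs: "summable (\<lambda>i. c (i + n))" using c by (rule summable_ignore_initial_segment)
      have ns: "summable (\<lambda>i. norm (f' (i + n) x h))"
        by (rule summable_comparison_test'[where g="\<lambda>i. c (i + n) * norm h"])
           (use cs bound in \<open>auto intro: summable_mult2\<close>)
      have "F' x h = (\<Sum>i. f' i x h)" using F' sums_unique by metis
      then have "norm (sum (\<lambda>i. f' i x h) {..<n} - F' x h) = norm (\<Sum>i. f' (i + n) x h)"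
        using suminf_minus_initial_segment[OF s, of n] by (simp add: norm_minus_commute)
      also have "\<dots> \<le> (\<Sum>i. norm (f' (i + n) x h))" by (rule summable_norm[OF ns])
      also have "\<dots> \<le> (\<Sum>i. c (i + n) * norm h)"
        by (intro suminf_le ns summable_mult2 cs bound)
      also have "\<dots> = (\<Sum>i. c (i + n)) * norm h" by (intro suminf_mult2[symmetric] cs)
      also have "\<dots> \<le> e * norm h"
        using N[OF n] by (intro mult_right_mono) auto
      finally show ?thesis .
    qed
    then show ?thesis unfolding eventually_sequentially by blast
  qed
  obtain G where G: "\<And>x. (\<lambda>n. f n x) sums G x \<and> (G has_derivative F' x) (at x)"
    using has_derivative_series[of UNIV f f' F' z "F z", OF convex_UNIV _ unif] f F by blast
  have "G = F" using G F sums_unique2 by (intro ext) blast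
  then show ?thesis using G[of z] by simp
qed

text \<open>Points of R x T are pairs z = (t, x); wave_mode k solves w_t = i w_xx with datum exp (i k x).\<close>

definition wave_mode :: "int \<Rightarrow> real \<times> real \<Rightarrow> complex" where
  "wave_mode k z = exp (\<i> * complex_of_real (real_of_int k * snd z - (real_of_int k)\<^sup>2 * fst z))"

definition free_wave :: "(int \<Rightarrow> complex) \<Rightarrow> real \<times> real \<Rightarrow> complex" where
  "free_wave a z = (\<Sum>\<^sub>\<infinity>k. a k * wave_mode k z)"

definition coeff_dt :: "(int \<Rightarrow> complex) \<Rightarrow> int \<Rightarrow> complex" where
  "coeff_dt a k = a k * (- \<i> * (of_int k)\<^sup>2)"

definition coeff_dx :: "(int \<Rightarrow> complex) \<Rightarrow> int \<Rightarrow> complex" where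
  "coeff_dx a k = a k * (\<i> * of_int k)"

lemma norm_wave_mode [simp]: "norm (wave_mode k z) = 1"
  unfolding wave_mode_def by (rule norm_exp_i_times)

lemma wave_mode_0: "wave_mode k (0, x) = exp ((\<i> * of_int k) * of_real x)"
  unfolding wave_mode_def by (simp add: algebra_simps)

lemma wave_mode_time_shift:
  "wave_mode k (t, x) = exp (- \<i> * of_real ((real_of_int k)\<^sup>2 * t)) * wave_mode k (0, x)"
  unfolding wave_mode_def by (simp add: exp_add[symmetric] algebra_simps)

lemma wave_mode_periodic: "wave_mode k (t, x + 2 * pi) = wave_mode k (t, x)"
proof -
  have "\<i> * complex_of_real (real_of_int k * (x + 2 * pi) - (real_of_int k)\<^sup>2 * t)
      = \<i> * complex_of_real (real_of_int k * x - (real_of_int k)\<^sup>2 * t) + \<i> * (of_int k * (of_real pi * 2))"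
    by (simp add: algebra_simps)
  then show ?thesis unfolding wave_mode_def by simp
qed

lemma wave_mode_has_derivative:
  "(wave_mode k has_derivative
     (\<lambda>v. wave_mode k z * (\<i> * complex_of_real (real_of_int k * snd v - (real_of_int k)\<^sup>2 * fst v)))) (at z)"
proof -
  have "((\<lambda>z. \<i> * complex_of_real (real_of_int k * snd z - (real_of_int k)\<^sup>2 * fst z)) has_derivative
     (\<lambda>v. \<i> * complex_of_real (real_of_int k * snd v - (real_of_int k)\<^sup>2 * fst v))) (at z)"
    by (auto intro!: derivative_eq_intros)
  from has_derivative_compose[OF this has_field_derivative_imp_has_derivative[OF DERIV_exp]]
  show ?thesis unfolding wave_mode_def by (simp add: mult.commute)
qed

lemma rapid_decay_coeff_dx: "rapid_decay a \<Longrightarrow> rapid_decay (coeff_dx a)"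
proof (rule rapid_decay_dominated[where j=1 and C=1])
  fix k
  have "cmod (coeff_dx a k) = cmod (a k) * \<bar>real_of_int k\<bar>" by (simp add: coeff_dx_def norm_mult)
  also have "\<dots> \<le> cmod (a k) * (1 + \<bar>real_of_int k\<bar>)" by (intro mult_left_mono) auto
  finally show "cmod (coeff_dx a k) \<le> (1 + \<bar>real_of_int k\<bar>) ^ 1 * 1 * cmod (a k)" by (simp add: mult_ac)
qed

lemma rapid_decay_coeff_dt: "rapid_decay a \<Longrightarrow> rapid_decay (coeff_dt a)"
proof (rule rapid_decay_dominated[where j=2 and C=1])
  fix k
  have "\<bar>real_of_int k\<bar>\<^sup>2 \<le> (1 + \<bar>real_of_int k\<bar>)\<^sup>2" by (intro power_mono) auto
  then have "cmod (a k) * (real_of_int k)\<^sup>2 \<le> cmod (a k) * (1 + \<bar>real_of_int k\<bar>)\<^sup>2"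
    by (intro mult_left_mono) auto
  then show "cmod (coeff_dt a k) \<le> (1 + \<bar>real_of_int k\<bar>)\<^sup>2 * 1 * cmod (a k)"
    by (simp add: coeff_dt_def norm_mult norm_power mult_ac)
qed

lemma coeff_dt_eq: "coeff_dt a = (\<lambda>k. \<i> * coeff_dx (coeff_dx a) k)"
  by (rule ext) (simp add: coeff_dt_def coeff_dx_def power2_eq_square algebra_simps)

lemma free_wave_abs_summable: "rapid_decay a \<Longrightarrow> (\<lambda>k. norm (a k * wave_mode k z)) summable_on UNIV"
  using rapid_decay_norm_summable by (simp add: norm_mult)

lemma free_wave_summable: "rapid_decay a \<Longrightarrow> (\<lambda>k. a k * wave_mode k z) summable_on UNIV"
  using free_wave_abs_summable abs_summable_summable by metis

lemma free_wave_has_sum: "rapid_decay a \<Longrightarrow> ((\<lambda>k. a k * wave_mode k z) has_sum free_wave a z) UNIV"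
  unfolding free_wave_def by (intro has_sum_infsum free_wave_summable)

lemma free_wave_sums: "rapid_decay a \<Longrightarrow> (\<lambda>n. a (int_decode n) * wave_mode (int_decode n) z) sums free_wave a z"
  unfolding free_wave_def by (rule sums_infsum_int_decode[OF free_wave_abs_summable])

lemma free_wave_add:
  "rapid_decay a \<Longrightarrow> rapid_decay b \<Longrightarrow> free_wave (\<lambda>k. a k + b k) z = free_wave a z + free_wave b z"
  unfolding free_wave_def distrib_right by (intro infsum_add free_wave_summable)

lemma free_wave_cmult: "free_wave (\<lambda>k. c * a k) z = c * free_wave a z"
  unfolding free_wave_def by (simp add: infsum_cmult_right' mult.assoc)

lemma norm_free_wave_le: "rapid_decay a \<Longrightarrow> cmod (free_wave a z) \<le> (\<Sum>\<^sub>\<infinity>k. cmod (a k))"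
  unfolding free_wave_def using norm_infsum_bound[OF free_wave_abs_summable] by (simp add: norm_mult)

lemma free_wave_periodic: "free_wave a (t, x + 2 * pi) = free_wave a (t, x)"
  unfolding free_wave_def by (simp add: wave_mode_periodic)

lemma free_wave_time_shift:
  "free_wave a (t, x) = free_wave (\<lambda>k. a k * exp (- \<i> * of_real ((real_of_int k)\<^sup>2 * t))) (0, x)"
  unfolding free_wave_def by (subst wave_mode_time_shift) (simp add: mult_ac)

lemma rapid_decay_time_shift:
  "rapid_decay a \<Longrightarrow> rapid_decay (\<lambda>k. a k * exp (- \<i> * of_real ((real_of_int k)\<^sup>2 * t)))"
  by (rule rapid_decay_dominated[where j=0 and C=1]) (auto simp: norm_mult)

lemma free_wave_has_derivative:
  assumes a: "rapid_decay a"
  shows "(free_wave a has_derivative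
     (\<lambda>v. of_real (fst v) * free_wave (coeff_dt a) z + of_real (snd v) * free_wave (coeff_dx a) z)) (at z)"
proof (rule has_derivative_series_dominated)
  let ?k = "\<lambda>n. real_of_int (int_decode n)"
  let ?f' = "\<lambda>n z v. a (int_decode n) * wave_mode (int_decode n) z *
      (\<i> * complex_of_real (?k n * snd v - (?k n)\<^sup>2 * fst v))"
  show "((\<lambda>z. a (int_decode n) * wave_mode (int_decode n) z) has_derivative ?f' n z) (at z)" for n z
    using has_derivative_mult_right[OF wave_mode_has_derivative] by (simp add: mult.assoc)
  show "(\<lambda>n. a (int_decode n) * wave_mode (int_decode n) z) sums free_wave a z" for z
    by (rule free_wave_sums[OF a])
  have "?f' n z v = of_real (fst v) * (coeff_dt a (int_decode n) * wave_mode (int_decode n) z)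
     + of_real (snd v) * (coeff_dx a (int_decode n) * wave_mode (int_decode n) z)" for n z v
    unfolding coeff_dt_def coeff_dx_def by (simp add: algebra_simps)
  then show "(\<lambda>n. ?f' n z v) sums
      (of_real (fst v) * free_wave (coeff_dt a) z + of_real (snd v) * free_wave (coeff_dx a) z)" for z v
    by (simp only:) (intro sums_add sums_mult free_wave_sums rapid_decay_coeff_dt rapid_decay_coeff_dx a)
  show "summable (\<lambda>n. cmod (a (int_decode n)) * (1 + \<bar>?k n\<bar>)\<^sup>2)"
    using rapid_decay_weighted_summable[OF a, of 2]
    by (subst (asm) summable_on_int_iff_summable_int_decode) (auto simp: mult_ac)
  show "norm (?f' n z v) \<le> cmod (a (int_decode n)) * (1 + \<bar>?k n\<bar>)\<^sup>2 * norm v" for n z v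
  proof -
    have "\<bar>?k n * snd v - (?k n)\<^sup>2 * fst v\<bar> \<le> \<bar>?k n\<bar> * \<bar>snd v\<bar> + (?k n)\<^sup>2 * \<bar>fst v\<bar>"
      by (simp add: abs_mult order_trans[OF abs_triangle_ineq4])
    also have "\<dots> \<le> \<bar>?k n\<bar> * norm v + (?k n)\<^sup>2 * norm v"
      using norm_fst_le[of "fst v" "snd v"] norm_snd_le[of "snd v" "fst v"]
      by (intro add_mono mult_left_mono) auto
    also have "\<dots> = (\<bar>?k n\<bar> + (?k n)\<^sup>2) * norm v"
      by (simp add: algebra_simps)
    also have "\<dots> \<le> (1 + \<bar>?k n\<bar>)\<^sup>2 * norm v"
      by (intro mult_right_mono) (auto simp: power2_eq_square algebra_simps)
    finally have "cmod (a (int_decode n)) * \<bar>?k n * snd v - (?k n)\<^sup>2 * fst v\<bar>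
        \<le> cmod (a (int_decode n)) * ((1 + \<bar>?k n\<bar>)\<^sup>2 * norm v)"
      by (intro mult_left_mono) auto
    moreover have "norm (?f' n z v) = cmod (a (int_decode n)) * \<bar>?k n * snd v - (?k n)\<^sup>2 * fst v\<bar>"
      by (simp only: norm_mult norm_wave_mode norm_ii norm_of_real mult_1_right mult_1_left)
    ultimately show ?thesis by (simp add: mult.assoc)
  qed
qed

lemma free_wave_has_vector_derivative_t:
  assumes "rapid_decay a"
  shows "((\<lambda>\<tau>. free_wave a (\<tau>, x)) has_vector_derivative free_wave (coeff_dt a) (t, x)) (at t)"
proof -
  have "((\<lambda>\<tau>::real. (\<tau>, x)) has_derivative (\<lambda>h. (h, 0))) (at t)"
    by (auto intro!: derivative_eq_intros)
  from has_derivative_compose[OF this free_wave_has_derivative[OF assms]]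
  show ?thesis unfolding has_vector_derivative_def by (simp add: scaleR_conv_of_real)
qed

lemma free_wave_has_vector_derivative_x:
  assumes "rapid_decay a"
  shows "((\<lambda>y. free_wave a (t, y)) has_vector_derivative free_wave (coeff_dx a) (t, x)) (at x)"
proof -
  have "((\<lambda>y::real. (t, y)) has_derivative (\<lambda>h. (0, h))) (at x)"
    by (auto intro!: derivative_eq_intros)
  from has_derivative_compose[OF this free_wave_has_derivative[OF assms]]
  show ?thesis unfolding has_vector_derivative_def by (simp add: scaleR_conv_of_real)
qed

lemma smooth_free_wave:
  assumes "rapid_decay a"
  shows "smooth (free_wave a)"
proof -
  let ?S = "{free_wave b | b. rapid_decay b}"
  have "has_derivatives_in ?S (free_wave b)" if b: "rapid_decay b" for b
  proof -
    have "(\<lambda>z. of_real (fst v) * free_wave (coeff_dt b) z + of_real (snd v) * free_wave (coeff_dx b) z)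
        = free_wave (\<lambda>k. of_real (fst v) * coeff_dt b k + of_real (snd v) * coeff_dx b k)" for v
      using b by (intro ext)
        (simp add: free_wave_add free_wave_cmult rapid_decay_cmult rapid_decay_coeff_dt rapid_decay_coeff_dx)
    moreover have "rapid_decay (\<lambda>k. of_real (fst v) * coeff_dt b k + of_real (snd v) * coeff_dx b k)" for v
      using b by (intro rapid_decay_add rapid_decay_cmult rapid_decay_coeff_dt rapid_decay_coeff_dx)
    ultimately show ?thesis unfolding has_derivatives_in_def
      by (intro exI[where x="\<lambda>z v. of_real (fst v) * free_wave (coeff_dt b) z
          + of_real (snd v) * free_wave (coeff_dx b) z"]) (auto intro: free_wave_has_derivative[OF b])
  qed
  then have "smooth_class ?S" unfolding smooth_class_def by auto
  moreover have "free_wave a \<in> ?S" using assms by blast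
  ultimately show ?thesis unfolding smooth_iff_smooth_class by (intro exI[of _ ?S] conjI)
qed

lemma continuous_on_free_wave_slice:
  "rapid_decay a \<Longrightarrow> continuous_on A (\<lambda>x. free_wave a (t, x))"
  by (rule continuous_on_compose2[of UNIV "free_wave a"])
     (auto intro!: continuous_intros intro: smooth_continuous_on smooth_free_wave)

section \<open>Fourier series on the circle\<close>

definition fourier_kernel :: "int \<Rightarrow> real \<Rightarrow> complex" where
  "fourier_kernel k x = exp ((- \<i> * of_int k) * of_real x)"

lemma fcoeff_eq_integral_kernel:
  "fcoeff f k = of_real (1 / (2 * pi)) * integral {0..2 * pi} (\<lambda>x. f x * fourier_kernel k x)"
  by (simp add: fcoeff_def fourier_kernel_def)

lemma fourier_kernel_eq_wave_mode: "fourier_kernel k x = wave_mode (- k) (0, x)"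
  unfolding wave_mode_0 fourier_kernel_def by simp

lemma continuous_on_fourier_kernel: "continuous_on A (fourier_kernel k)"
  unfolding fourier_kernel_def by (intro continuous_intros)

lemma continuous_on_wave_mode_0: "continuous_on A (\<lambda>x. wave_mode k (0, x))"
  unfolding wave_mode_0 by (intro continuous_intros)

lemma has_vector_derivative_exp_mult_of_real:
  "((\<lambda>x. exp (c * of_real x)) has_vector_derivative (c * exp (c * of_real x))) (at x within S)"
  for c :: complex
proof -
  have "((\<lambda>z. exp (c * z)) has_field_derivative (c * exp (c * of_real x))) (at (of_real x))"
    by (auto intro!: derivative_eq_intros)
  then show ?thesis by (rule has_vector_derivative_real_field)
qed

lemma exp_i_int_2pi: "exp ((\<i> * of_int m) * of_real (2 * pi)) = 1"
proof -
  have "(\<i> * of_int m) * of_real (2 * pi) = \<i> * (of_int m * (of_real pi * 2))" by (simp add: algebra_simps)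
  then show ?thesis by (simp only: exp_2pi_1_int)
qed

lemma fourier_kernel_2pi: "fourier_kernel k (2 * pi) = 1"
  using exp_i_int_2pi[of "- k"] unfolding fourier_kernel_def by simp

lemma has_integral_exp_i_int:
  "((\<lambda>x. exp ((\<i> * of_int m) * of_real x)) has_integral (if m = 0 then of_real (2 * pi) else 0)) {0..2 * pi}"
proof (cases "m = 0")
  case True
  then show ?thesis using has_integral_const_real[of "1::complex" 0 "2 * pi"]
    by (simp add: scaleR_conv_of_real)
next
  case False
  let ?c = "\<i> * of_int m :: complex"
  have "((\<lambda>x. exp (?c * of_real x)) has_integral
      (exp (?c * of_real (2 * pi)) / ?c - exp (?c * of_real 0) / ?c)) {0..2 * pi}"
  proof (rule fundamental_theorem_of_calculus)
    fix x :: real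
    have "((\<lambda>z. exp (?c * z) / ?c) has_field_derivative exp (?c * of_real x)) (at (of_real x))"
      using False by (auto intro!: derivative_eq_intros)
    then show "((\<lambda>x. exp (?c * of_real x) / ?c) has_vector_derivative exp (?c * of_real x))
        (at x within {0..2 * pi})"
      by (rule has_vector_derivative_real_field)
  qed simp
  moreover have "exp (?c * of_real (2 * pi)) = 1" by (rule exp_i_int_2pi)
  ultimately show ?thesis using False by simp
qed

lemma integral_fourier_kernel_wave_mode:
  "integral {0..2 * pi} (\<lambda>x. fourier_kernel k x * (c * wave_mode j (0, x))) = (if j = k then c * of_real (2 * pi) else 0)"
proof -
  have "(\<lambda>x. fourier_kernel k x * (c * wave_mode j (0, x))) = (\<lambda>x. c * exp ((\<i> * of_int (j - k)) * of_real x))"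
    by (auto simp: fourier_kernel_def wave_mode_0 exp_add[symmetric] algebra_simps)
  then show ?thesis using has_integral_exp_i_int[of "j - k"]
    by (auto simp: integral_mult_right integral_unique)
qed

lemma has_sum_integral_free_wave:
  assumes a: "rapid_decay a" and h: "continuous_on {0..2 * pi} h"
  shows "((\<lambda>k. integral {0..2 * pi} (\<lambda>x. h x * (a k * wave_mode k (0, x)))) has_sum
          integral {0..2 * pi} (\<lambda>x. h x * free_wave a (0, x))) UNIV"
proof -
  obtain H where H: "\<And>x. x \<in> {0..2 * pi} \<Longrightarrow> norm (h x) \<le> H"
    using compact_imp_bounded[OF compact_continuous_image[OF h compact_Icc]]
    unfolding bounded_iff by blast
  define F where "F k x = h x * (a k * wave_mode k (0, x))" for k x
  have unif: "uniform_limit {0..2 * pi} (\<lambda>X x. \<Sum>k\<in>X. F k x) (\<lambda>x. h x * free_wave a (0, x))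
      (finite_subsets_at_top UNIV)"
  proof (rule Weierstrass_m_test_general'[where M="\<lambda>k. H * cmod (a k)"])
    show "norm (F k x) \<le> H * cmod (a k)" if "x \<in> {0..2 * pi}" for k x
      unfolding F_def using H[OF that] by (simp add: norm_mult mult_right_mono)
    show "(\<lambda>k. H * cmod (a k)) summable_on UNIV"
      by (intro summable_on_cmult_right rapid_decay_norm_summable a)
    show "((\<lambda>k. F k x) has_sum h x * free_wave a (0, x)) UNIV" for x
      unfolding F_def by (intro has_sum_cmult_right free_wave_has_sum a)
  qed
  have cont: "continuous_on {0..2 * pi} (\<lambda>x. \<Sum>k\<in>X. F k x)" for X
    unfolding F_def by (intro continuous_intros h continuous_on_wave_mode_0)
  obtain I J where I: "\<And>X. ((\<lambda>x. \<Sum>k\<in>X. F k x) has_integral I X) {0..2 * pi}"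
    and J: "((\<lambda>x. h x * free_wave a (0, x)) has_integral J) {0..2 * pi}"
    and lim: "(I \<longlongrightarrow> J) (finite_subsets_at_top UNIV)"
    using uniform_limit_integral[OF unif cont] by auto
  have F_int: "F k integrable_on {0..2 * pi}" for k
    unfolding F_def by (intro integrable_continuous_interval continuous_intros h continuous_on_wave_mode_0)
  have "I X = (\<Sum>k\<in>X. integral {0..2 * pi} (F k))" for X
  proof (cases "finite X")
    case True
    then show ?thesis using I[of X] integral_sum[OF True, of F "{0..2 * pi}"] F_int
      by (simp add: integral_unique)
  qed (use I[of X] in \<open>simp add: has_integral_0_eq\<close>)
  then have "I = (\<lambda>X. \<Sum>k\<in>X. integral {0..2 * pi} (F k))" by auto
  then have "((\<lambda>k. integral {0..2 * pi} (F k)) has_sum J) UNIV"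
    using lim unfolding has_sum_def by simp
  then show ?thesis using J unfolding F_def by (simp add: integral_unique)
qed

lemma integral_fourier_kernel_free_wave:
  assumes a: "rapid_decay a"
  shows "integral {0..2 * pi} (\<lambda>x. fourier_kernel k x * free_wave a (0, x)) = a k * of_real (2 * pi)"
proof -
  have "((\<lambda>j. integral {0..2 * pi} (\<lambda>x. fourier_kernel k x * (a j * wave_mode j (0, x)))) has_sum
          integral {0..2 * pi} (\<lambda>x. fourier_kernel k x * free_wave a (0, x))) UNIV"
    by (rule has_sum_integral_free_wave[OF a continuous_on_fourier_kernel])
  moreover have "((\<lambda>j. integral {0..2 * pi} (\<lambda>x. fourier_kernel k x * (a j * wave_mode j (0, x))))
      has_sum a k * of_real (2 * pi)) UNIV"
    unfolding integral_fourier_kernel_wave_mode by (rule has_sum_finite_neutralI[of "{k}"]) auto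
  ultimately show ?thesis using has_sum_unique by blast
qed

lemma fcoeff_free_wave: "rapid_decay a \<Longrightarrow> fcoeff (\<lambda>x. free_wave a (0, x)) k = a k"
  unfolding fcoeff_eq_integral_kernel using integral_fourier_kernel_free_wave[of a k]
  by (simp add: mult.commute)

lemma integral_of_real_continuous:
  fixes f :: "real \<Rightarrow> real"
  assumes "continuous_on {a..b} f"
  shows "integral {a..b} (\<lambda>x. complex_of_real (f x)) = of_real (integral {a..b} f)"
  using has_integral_of_real[OF integrable_integral[OF integrable_continuous_interval[OF assms]]]
  by (rule integral_unique)

lemma parseval_free_wave:
  assumes a: "rapid_decay a"
  shows "((\<lambda>k. (cmod (a k))\<^sup>2) has_sum integral {0..2 * pi} (\<lambda>x. (cmod (free_wave a (0, x)))\<^sup>2) / (2 * pi)) UNIV"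
proof -
  let ?w = "\<lambda>x. free_wave a (0, x)"
  have cnj_kernel: "cnj (fourier_kernel k x) = wave_mode k (0, x)" for k x
    by (simp add: fourier_kernel_def wave_mode_0 exp_cnj)
  have "integral {0..2 * pi} (\<lambda>x. cnj (?w x) * (a k * wave_mode k (0, x)))
      = a k * cnj (integral {0..2 * pi} (\<lambda>x. fourier_kernel k x * ?w x))" for k
  proof -
    have "(\<lambda>x. cnj (?w x) * (a k * wave_mode k (0, x))) = (\<lambda>x. a k * cnj (fourier_kernel k x * ?w x))"
      by (simp add: cnj_kernel mult_ac)
    then show ?thesis by (simp only: integral_mult_right integral_cnj)
  qed
  also have "\<dots> k = of_real (2 * pi) * of_real ((cmod (a k))\<^sup>2)" for k
    unfolding integral_fourier_kernel_free_wave[OF a] complex_norm_square by (simp add: mult_ac)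
  finally have "((\<lambda>k. of_real (2 * pi) * of_real ((cmod (a k))\<^sup>2)) has_sum
      integral {0..2 * pi} (\<lambda>x. cnj (?w x) * ?w x)) UNIV"
    using has_sum_integral_free_wave[OF a, of "\<lambda>x. cnj (?w x)"] continuous_on_free_wave_slice[OF a]
    by (simp add: continuous_on_cnj)
  moreover have "(\<lambda>x. cnj (?w x) * ?w x) = (\<lambda>x. of_real ((cmod (?w x))\<^sup>2))"
    by (intro ext) (simp only: complex_norm_square mult.commute)
  moreover have "integral {0..2 * pi} (\<lambda>x. complex_of_real ((cmod (?w x))\<^sup>2))
      = of_real (integral {0..2 * pi} (\<lambda>x. (cmod (?w x))\<^sup>2))"
    by (intro integral_of_real_continuous continuous_intros continuous_on_free_wave_slice a)
  ultimately have "((\<lambda>k. of_real (2 * pi) * of_real ((cmod (a k))\<^sup>2)) has_sum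
      complex_of_real (integral {0..2 * pi} (\<lambda>x. (cmod (?w x))\<^sup>2))) UNIV"
    by simp
  from has_sum_Re[OF this] have "((\<lambda>k. 2 * pi * (cmod (a k))\<^sup>2) has_sum
      integral {0..2 * pi} (\<lambda>x. (cmod (?w x))\<^sup>2)) UNIV"
    by simp
  from has_sum_cmult_right[OF this, of "1 / (2 * pi)"] show ?thesis by simp
qed

lemma integral_norm_free_wave_squared:
  assumes a: "rapid_decay a"
  shows "integral {0..2 * pi} (\<lambda>x. (cmod (free_wave a (t, x)))\<^sup>2) = 2 * pi * (\<Sum>\<^sub>\<infinity>k. (cmod (a k))\<^sup>2)"
proof -
  define c where "c k = a k * exp (- \<i> * of_real ((real_of_int k)\<^sup>2 * t))" for k
  have c: "rapid_decay c" unfolding c_def by (rule rapid_decay_time_shift[OF a])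
  have "cmod (c k) = cmod (a k)" for k unfolding c_def by (simp add: norm_mult)
  then have "(\<Sum>\<^sub>\<infinity>k. (cmod (a k))\<^sup>2) = integral {0..2 * pi} (\<lambda>x. (cmod (free_wave c (0, x)))\<^sup>2) / (2 * pi)"
    using infsumI[OF parseval_free_wave[OF c]] by simp
  moreover have "free_wave a (t, x) = free_wave c (0, x)" for x
    unfolding c_def by (rule free_wave_time_shift)
  ultimately show ?thesis by simp
qed

lemma periodic2pi_shift_int:
  assumes "periodic2pi f"
  shows "f (x + 2 * pi * of_int n) = f x"
proof -
  have pos: "f (x + 2 * pi * real m) = f x" for x m
  proof (induction m arbitrary: x)
    case (Suc m)
    have "f (x + 2 * pi * real (Suc m)) = f ((x + 2 * pi * real m) + 2 * pi)"
      by (simp add: algebra_simps)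
    also have "\<dots> = f (x + 2 * pi * real m)" using assms unfolding periodic2pi_def by blast
    finally show ?case using Suc by simp
  qed simp
  show ?thesis
  proof (cases "n \<ge> 0")
    case True
    then show ?thesis using pos[of x "nat n"] by simp
  next
    case False
    then have "f (x + 2 * pi * of_int n) = f ((x + 2 * pi * of_int n) + 2 * pi * real (nat (- n)))"
      using pos[of "x + 2 * pi * of_int n" "nat (- n)", symmetric] by simp
    also have "\<dots> = f x" using False by (simp add: algebra_simps)
    finally show ?thesis .
  qed
qed

lemma periodic2pi_eq_mod_2pi:
  assumes "periodic2pi f"
  obtains y where "y \<in> {0..2 * pi}" "f x = f y"
proof
  define n where "n = \<lfloor>x / (2 * pi)\<rfloor>"
  have "2 * pi * of_int n \<le> x" "x < 2 * pi * (of_int n + 1)"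
    using floor_divide_lower[of "2 * pi" x] floor_divide_upper[of "2 * pi" x]
    by (simp_all add: n_def mult.commute)
  then show "x - 2 * pi * of_int n \<in> {0..2 * pi}" by (simp add: algebra_simps)
  show "f x = f (x - 2 * pi * of_int n)"
    using periodic2pi_shift_int[OF assms, of "x - 2 * pi * of_int n" n] by simp
qed

lemma periodic2pi_is_Arg:
  assumes "periodic2pi r" "is_Arg z a" "is_Arg z b" "z \<noteq> 0"
  shows "r a = r b"
proof -
  have "of_real (norm z) * exp (\<i> * of_real a) = of_real (norm z) * exp (\<i> * of_real b)"
    using assms(2,3) unfolding is_Arg_def by metis
  then have "exp (\<i> * of_real a) = exp (\<i> * of_real b)" using assms(4) by simp
  then obtain n :: int where "\<i> * of_real a = \<i> * of_real b + (of_int (2 * n) * pi) * \<i>"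
    unfolding exp_eq by blast
  then have "Im (\<i> * of_real a) = Im (\<i> * of_real b + (of_int (2 * n) * pi) * \<i>)" by simp
  then have "a = b + 2 * pi * of_int n" by simp
  then show ?thesis using periodic2pi_shift_int[OF assms(1)] by simp
qed

inductive_set trig_poly :: "(real \<Rightarrow> complex) set" where
  mode: "(\<lambda>x. wave_mode k (0, x)) \<in> trig_poly"
| cmult: "f \<in> trig_poly \<Longrightarrow> (\<lambda>x. c * f x) \<in> trig_poly"
| add: "f \<in> trig_poly \<Longrightarrow> g \<in> trig_poly \<Longrightarrow> (\<lambda>x. f x + g x) \<in> trig_poly"

lemma continuous_on_trig_poly: "f \<in> trig_poly \<Longrightarrow> continuous_on A f"
  by (induction rule: trig_poly.induct) (auto intro!: continuous_intros continuous_on_wave_mode_0)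

lemma trig_poly_mult_mode: "f \<in> trig_poly \<Longrightarrow> (\<lambda>x. wave_mode k (0, x) * f x) \<in> trig_poly"
proof (induction rule: trig_poly.induct)
  case (mode j)
  have "wave_mode k (0, x) * wave_mode j (0, x) = wave_mode (k + j) (0, x)" for x
    unfolding wave_mode_0 by (simp add: exp_add[symmetric] algebra_simps)
  then show ?case by (simp add: trig_poly.mode)
next
  case (cmult f c)
  from trig_poly.cmult[OF cmult.IH, of c] show ?case by (simp add: mult_ac)
next
  case (add f g)
  from trig_poly.add[OF add.IH] show ?case by (simp add: distrib_left)
qed

lemma trig_poly_mult: "f \<in> trig_poly \<Longrightarrow> g \<in> trig_poly \<Longrightarrow> (\<lambda>x. f x * g x) \<in> trig_poly"
proof (induction rule: trig_poly.induct)
  case (mode k) then show ?case by (rule trig_poly_mult_mode)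
next
  case (cmult f c)
  from trig_poly.cmult[OF cmult.IH[OF cmult.prems], of c] show ?case by (simp add: mult_ac)
next
  case (add f1 f2)
  from trig_poly.add[OF add.IH[OF add.prems]] show ?case by (simp add: distrib_right)
qed

lemma trig_poly_const: "(\<lambda>x. c) \<in> trig_poly"
  using trig_poly.cmult[OF trig_poly.mode[of 0], of c] by (simp add: wave_mode_0)

lemma trig_poly_cos: "(\<lambda>x. complex_of_real (cos x)) \<in> trig_poly"
proof -
  have "(\<lambda>x. (1/2) * wave_mode 1 (0, x) + (1/2) * wave_mode (-1) (0, x)) \<in> trig_poly"
    by (intro trig_poly.add trig_poly.cmult trig_poly.mode)
  moreover have "(1/2) * wave_mode 1 (0, x) + (1/2) * wave_mode (-1) (0, x) = complex_of_real (cos x)" for x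
    unfolding wave_mode_0 cos_of_real[symmetric] cos_exp_eq by (simp add: field_simps)
  ultimately show ?thesis by simp
qed

lemma trig_poly_sin: "(\<lambda>x. complex_of_real (sin x)) \<in> trig_poly"
proof -
  have "(\<lambda>x. (1/(2*\<i>)) * wave_mode 1 (0, x) + (-1/(2*\<i>)) * wave_mode (-1) (0, x)) \<in> trig_poly"
    by (intro trig_poly.add trig_poly.cmult trig_poly.mode)
  moreover have "(1/(2*\<i>)) * wave_mode 1 (0, x) + (-1/(2*\<i>)) * wave_mode (-1) (0, x) = complex_of_real (sin x)" for x
    unfolding wave_mode_0 sin_of_real[symmetric] sin_exp_eq by (simp add: field_simps)
  ultimately show ?thesis by simp
qed

lemma trig_poly_real_polynomial_cis:
  fixes g :: "complex \<Rightarrow> real"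
  assumes "real_polynomial_function g"
  shows "(\<lambda>x. complex_of_real (g (cis x))) \<in> trig_poly"
  using assms
proof induction
  case (linear f)
  have lin: "linear f" using linear bounded_linear.linear by blast
  have "f (cis x) = f (cos x *\<^sub>R 1 + sin x *\<^sub>R \<i>)" for x
    by (rule arg_cong[of _ _ f]) (simp add: complex_eq_iff)
  also have "\<dots> x = cos x * f 1 + sin x * f \<i>" for x
    using linear_add[OF lin] linear_scale[OF lin] by simp
  finally have "(\<lambda>x. complex_of_real (f (cis x)))
      = (\<lambda>x. complex_of_real (cos x) * of_real (f 1) + complex_of_real (sin x) * of_real (f \<i>))"
    by simp
  moreover have "(\<lambda>x. complex_of_real (cos x) * of_real (f 1) + complex_of_real (sin x) * of_real (f \<i>)) \<in> trig_poly"
    by (intro trig_poly.add trig_poly_mult trig_poly_cos trig_poly_sin trig_poly_const)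
  ultimately show ?case by simp
next
  case (const c) show ?case by (rule trig_poly_const)
next
  case (add f g)
  from trig_poly.add[OF add.IH] show ?case by simp
next
  case (mult f g)
  from trig_poly_mult[OF mult.IH] show ?case by simp
qed

lemma integral_mult_trig_poly_eq_0:
  assumes h: "continuous_on {0..2 * pi} h"
    and orth: "\<And>k. integral {0..2 * pi} (\<lambda>x. h x * wave_mode k (0, x)) = 0"
    and p: "p \<in> trig_poly"
  shows "integral {0..2 * pi} (\<lambda>x. h x * p x) = 0"
  using p
proof induction
  case (mode k) then show ?case by (rule orth)
next
  case (cmult f c)
  have "integral {0..2 * pi} (\<lambda>x. h x * (c * f x)) = c * integral {0..2 * pi} (\<lambda>x. h x * f x)"
    by (simp add: mult_ac)
  then show ?case using cmult by simp
next
  case (add f g)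
  have "integral {0..2 * pi} (\<lambda>x. h x * (f x + g x))
      = integral {0..2 * pi} (\<lambda>x. h x * f x) + integral {0..2 * pi} (\<lambda>x. h x * g x)"
    unfolding distrib_left
    by (intro integral_add integrable_continuous_interval continuous_intros h continuous_on_trig_poly add.hyps)
  then show ?case using add by simp
qed

lemma continuous_on_sphere_periodic_Arg2pi:
  fixes r :: "real \<Rightarrow> real"
  assumes rc: "continuous_on UNIV r" and rp: "periodic2pi r"
  shows "continuous_on (sphere 0 1) (\<lambda>z. r (Arg2pi z))"
proof (rule continuous_at_imp_continuous_on, rule ballI)
  fix z :: complex assume "z \<in> sphere 0 1"
  then have z0: "z \<noteq> 0" by auto
  have rC: "isCont r x" for x using rc continuous_on_eq_continuous_at open_UNIV by blast
  show "isCont (\<lambda>z. r (Arg2pi z)) z"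
  proof (cases "z \<in> \<real>\<^sub>\<ge>\<^sub>0")
    case False
    show ?thesis using continuous_at_Arg2pi[OF False] rC by (rule isCont_o2)
  next
    case True
    \<comment> \<open>Arg2pi jumps on the positive real axis; switch to Arg, which agrees modulo 2 pi\<close>
    then have nz: "z \<notin> \<real>\<^sub>\<le>\<^sub>0" using z0
      by (auto simp: complex_nonneg_Reals_iff complex_nonpos_Reals_iff complex_eq_iff)
    have "eventually (\<lambda>w. w \<in> - {0}) (nhds z)"
      using z0 by (intro eventually_nhds_in_open) auto
    then have ev: "eventually (\<lambda>w. r (Arg2pi w) = r (Arg w)) (nhds z)"
    proof eventually_elim
      case (elim w)
      then have w: "w \<noteq> 0" by simp
      have "is_Arg w (Arg w)" unfolding is_Arg_def using Arg_eq[OF w] by blast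
      moreover have "is_Arg w (Arg2pi w)" using Arg2pi by blast
      ultimately show ?case using periodic2pi_is_Arg[OF rp _ _ w] by blast
    qed
    have "isCont (\<lambda>w. r (Arg w)) z" using continuous_at_Arg[OF nz] rC by (rule isCont_o2)
    then show ?thesis using isCont_cong[OF ev] by simp
  qed
qed

lemma continuous_on_bounded_Icc:
  fixes h :: "real \<Rightarrow> 'a::real_normed_vector"
  assumes "continuous_on {a..b} h"
  obtains H where "H \<ge> 0" "\<And>x. x \<in> {a..b} \<Longrightarrow> norm (h x) \<le> H"
proof -
  obtain H where "\<And>x. x \<in> {a..b} \<Longrightarrow> norm (h x) \<le> H"
    using compact_imp_bounded[OF compact_continuous_image[OF assms compact_Icc]]
    unfolding bounded_iff by blast
  then show thesis by (intro that[of "max H 0"]) (auto intro: order_trans max.cobounded1)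
qed

lemma trig_poly_approximation:
  fixes r :: "real \<Rightarrow> real"
  assumes rc: "continuous_on UNIV r" and rp: "periodic2pi r" and e: "e > 0"
  obtains q where "q \<in> trig_poly" "\<And>x. cmod (of_real (r x) - q x) < e"
proof -
  \<comment> \<open>Stone-Weierstrass on the unit circle, pulled back along cis\<close>
  obtain g where g: "real_polynomial_function g"
    "\<And>z. z \<in> sphere 0 1 \<Longrightarrow> \<bar>r (Arg2pi z) - g z\<bar> < e"
    using Stone_Weierstrass_real_polynomial_function[OF compact_sphere
        continuous_on_sphere_periodic_Arg2pi[OF rc rp] e] by blast
  have "r (Arg2pi (cis x)) = r x" for x
  proof (rule periodic2pi_is_Arg[OF rp _ _ cis_neq_zero])
    show "is_Arg (cis x) (Arg2pi (cis x))" using Arg2pi by blast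
    show "is_Arg (cis x) x" unfolding is_Arg_def by (simp add: cis_conv_exp)
  qed
  then have "cmod (of_real (r x) - of_real (g (cis x))) < e" for x
    using g(2)[of "cis x"] by (simp flip: of_real_diff)
  then show thesis by (rule that[OF trig_poly_real_polynomial_cis[OF g(1)]])
qed

lemma integral_mult_periodic_eq_0:
  fixes r :: "real \<Rightarrow> real"
  assumes rc: "continuous_on UNIV r" and rp: "periodic2pi r"
    and h: "continuous_on {0..2 * pi} h"
    and orth: "\<And>q. q \<in> trig_poly \<Longrightarrow> integral {0..2 * pi} (\<lambda>x. h x * q x) = 0"
  shows "integral {0..2 * pi} (\<lambda>x. h x * of_real (r x)) = 0"
proof -
  obtain H where H0: "H \<ge> 0" and H: "\<And>x. x \<in> {0..2 * pi} \<Longrightarrow> norm (h x) \<le> H"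
    using continuous_on_bounded_Icc[OF h] by blast
  let ?I = "integral {0..2 * pi} (\<lambda>x. h x * of_real (r x))"
  have rc': "continuous_on {0..2 * pi} (\<lambda>x. complex_of_real (r x))"
    by (intro continuous_intros continuous_on_subset[OF rc]) auto
  have bound: "norm ?I \<le> H * e * (2 * pi)" if e: "e > 0" for e
  proof -
    obtain q where q: "q \<in> trig_poly" "\<And>x. cmod (of_real (r x) - q x) < e"
      using trig_poly_approximation[OF rc rp e] by blast
    have qc: "continuous_on {0..2 * pi} q" using q(1) by (rule continuous_on_trig_poly)
    have "?I = integral (cbox 0 (2 * pi)) (\<lambda>x. h x * (of_real (r x) - q x))"
      using orth[OF q(1)] unfolding right_diff_distrib
      by (subst integral_diff) (auto intro!: integrable_continuous_interval continuous_intros h rc' qc)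
    also have "norm \<dots> \<le> H * e * measure lborel (cbox 0 (2 * pi))"
    proof (rule integrable_bound)
      show "(\<lambda>x. h x * (of_real (r x) - q x)) integrable_on cbox 0 (2 * pi)"
        by (auto intro!: integrable_continuous_interval continuous_intros h rc' qc)
      show "norm (h x * (of_real (r x) - q x)) \<le> H * e" if "x \<in> cbox 0 (2 * pi)" for x
        using H[of x] that q(2)[of x] H0 by (auto simp: norm_mult intro!: mult_mono)
    qed (use H0 e in simp)
    finally show ?thesis by simp
  qed
  have "\<bar>norm ?I\<bar> \<le> e" if e: "e > 0" for e
  proof -
    have "norm ?I \<le> H * (e / ((H + 1) * (2 * pi))) * (2 * pi)"
      by (rule bound) (use H0 e in simp)
    also have "\<dots> = e * (H / (H + 1))"
      using H0 by (simp add: field_simps add_nonneg_eq_0_iff)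
    also have "\<dots> \<le> e"
      using H0 e by (intro mult_left_le) auto
    finally show ?thesis by simp
  qed
  then show ?thesis using dense_eq0_I[of "norm ?I"] by simp
qed

lemma fcoeff_eq_0_imp_eq_0:
  assumes hc: "continuous_on UNIV h" and hp: "periodic2pi h" and hz: "\<And>k. fcoeff h k = 0"
  shows "h x = 0"
proof -
  have hc': "continuous_on {0..2 * pi} h" using continuous_on_subset[OF hc] by blast
  have "integral {0..2 * pi} (\<lambda>x. h x * wave_mode k (0, x)) = 0" for k
    using hz[of "- k"] unfolding fcoeff_eq_integral_kernel fourier_kernel_eq_wave_mode by simp
  then have orth: "\<And>p. p \<in> trig_poly \<Longrightarrow> integral {0..2 * pi} (\<lambda>x. h x * p x) = 0"
    by (rule integral_mult_trig_poly_eq_0[OF hc'])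
  have "integral {0..2 * pi} (\<lambda>x. h x * of_real (q (h x))) = 0"
    if "continuous_on UNIV q" for q :: "complex \<Rightarrow> real"
    by (rule integral_mult_periodic_eq_0[OF _ _ hc' orth])
       (use hp that in \<open>auto intro!: continuous_intros continuous_on_compose2[OF that hc]
                          simp: periodic2pi_def\<close>)
  then have "integral {0..2 * pi} (\<lambda>x. h x * of_real (Re (h x))) = 0"
    "integral {0..2 * pi} (\<lambda>x. h x * of_real (Im (h x))) = 0"
    by (auto intro: continuous_on_Re continuous_on_Im continuous_on_id)
  then have "integral {0..2 * pi} (\<lambda>x. h x * of_real (Re (h x)) - \<i> * (h x * of_real (Im (h x)))) = 0"
    by (subst integral_diff) (auto intro!: integrable_continuous_interval continuous_intros hc')
  moreover have "h x * of_real (Re (h x)) - \<i> * (h x * of_real (Im (h x))) = of_real ((cmod (h x))\<^sup>2)" for x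
  proof -
    have "complex_of_real ((cmod (h x))\<^sup>2) = h x * cnj (h x)" by (simp only: complex_norm_square)
    also have "cnj (h x) = of_real (Re (h x)) - \<i> * of_real (Im (h x))" by (simp add: complex_eq_iff)
    finally show ?thesis by (simp add: algebra_simps)
  qed
  ultimately have "integral {0..2 * pi} (\<lambda>x. (cmod (h x))\<^sup>2) = 0"
    using integral_of_real_continuous[of 0 "2 * pi" "\<lambda>x. (cmod (h x))\<^sup>2"]
    by (simp add: continuous_intros hc')
  then have "\<forall>y\<in>{0..2 * pi}. (cmod (h y))\<^sup>2 = 0"
    by (subst (asm) integral_eq_0_iff) (auto intro!: continuous_intros hc')
  moreover obtain y where "y \<in> {0..2 * pi}" "h x = h y"
    using periodic2pi_eq_mod_2pi[OF hp] by blast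
  ultimately show ?thesis by simp
qed

lemma fcoeff_diff:
  assumes "continuous_on {0..2 * pi} f" "continuous_on {0..2 * pi} g"
  shows "fcoeff (\<lambda>x. f x - g x) k = fcoeff f k - fcoeff g k"
  unfolding fcoeff_eq_integral_kernel left_diff_distrib
  by (subst integral_diff)
     (auto intro!: integrable_continuous_interval continuous_intros continuous_on_fourier_kernel assms
       simp: right_diff_distrib)

lemma fourier_inversion:
  assumes fc: "continuous_on UNIV f" and fp: "periodic2pi f" and r: "rapid_decay (fcoeff f)"
  shows "f x = free_wave (fcoeff f) (0, x)"
proof -
  let ?h = "\<lambda>x. f x - free_wave (fcoeff f) (0, x)"
  have "?h x = 0"
  proof (rule fcoeff_eq_0_imp_eq_0)
    show "continuous_on UNIV ?h" by (intro continuous_intros fc continuous_on_free_wave_slice r)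
    show "periodic2pi ?h" using fp free_wave_periodic unfolding periodic2pi_def by simp
    fix k
    have "fcoeff ?h k = fcoeff f k - fcoeff (\<lambda>x. free_wave (fcoeff f) (0, x)) k"
      by (rule fcoeff_diff) (auto intro: continuous_on_subset[OF fc] continuous_on_free_wave_slice r)
    then show "fcoeff ?h k = 0" using fcoeff_free_wave[OF r] by simp
  qed
  then show ?thesis by simp
qed

lemma fcoeff_deriv:
  assumes d: "\<And>x. (f has_vector_derivative f' x) (at x)" and p: "periodic2pi f"
  shows "fcoeff f' k = \<i> * of_int k * fcoeff f k"
proof -
  let ?c = "- \<i> * of_int k :: complex"
  have fc: "continuous_on UNIV f"
    using d has_vector_derivative_continuous continuous_at_imp_continuous_on by blast
  have "(\<lambda>x. f x * fourier_kernel k x) integrable_on {0..2 * pi}"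
    by (intro integrable_continuous_interval continuous_intros continuous_on_fourier_kernel
        continuous_on_subset[OF fc]) auto
  then obtain J where J: "((\<lambda>x. f x * fourier_kernel k x) has_integral J) {0..2 * pi}" by blast
  have J2: "((\<lambda>x. f x * (?c * fourier_kernel k x)) has_integral (?c * J)) {0..2 * pi}"
    using has_integral_mult_right[OF J, of ?c] by (simp add: mult_ac)
  have f2: "f (2 * pi) = f 0" using p unfolding periodic2pi_def by (metis add_0)
  have "((\<lambda>x. f' x * fourier_kernel k x) has_integral (- (?c * J))) {0..2 * pi}"
  proof (rule integration_by_parts[OF bounded_bilinear_mult, of 0 "2 * pi" f "fourier_kernel k" f'
        "\<lambda>x. ?c * fourier_kernel k x"])
    show "continuous_on {0..2 * pi} f" using continuous_on_subset[OF fc] by blast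
    show "continuous_on {0..2 * pi} (fourier_kernel k)" by (rule continuous_on_fourier_kernel)
    show "(f has_vector_derivative f' x) (at x)" for x by (rule d)
    show "(fourier_kernel k has_vector_derivative ?c * fourier_kernel k x) (at x)" for x
      unfolding fourier_kernel_def by (rule has_vector_derivative_exp_mult_of_real)
    show "((\<lambda>x. f x * (?c * fourier_kernel k x)) has_integral
        f (2 * pi) * fourier_kernel k (2 * pi) - f 0 * fourier_kernel k 0 - - (?c * J)) {0..2 * pi}"
      using J2 by (simp add: f2 fourier_kernel_2pi fourier_kernel_def[of k 0])
  qed simp
  then show ?thesis
    using integral_unique[OF J] unfolding fcoeff_eq_integral_kernel by (simp add: integral_unique)
qed

lemma norm_fcoeff_le:
  assumes "continuous_on {0..2 * pi} g" "\<And>x. x \<in> {0..2 * pi} \<Longrightarrow> norm (g x) \<le> B"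
  shows "cmod (fcoeff g k) \<le> B"
proof -
  have "0 \<le> B" using order_trans[OF norm_ge_zero assms(2)[of 0]] by simp
  then have "norm (integral (cbox 0 (2 * pi)) (\<lambda>x. g x * fourier_kernel k x)) \<le> B * measure lborel (cbox 0 (2 * pi))"
    by (intro integrable_bound)
       (use assms in \<open>auto intro!: integrable_continuous_interval continuous_intros continuous_on_fourier_kernel
          simp: norm_mult fourier_kernel_def\<close>)
  then have "norm (integral {0..2 * pi} (\<lambda>x. g x * fourier_kernel k x)) \<le> B * (2 * pi)" by simp
  moreover have "cmod (fcoeff g k) = norm (integral {0..2 * pi} (\<lambda>x. g x * fourier_kernel k x)) / (2 * pi)"
    unfolding fcoeff_eq_integral_kernel by (simp add: norm_mult norm_divide)
  ultimately show ?thesis by (simp add: divide_le_eq)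
qed

lemma smooth_periodic_derivative:
  fixes f :: "real \<Rightarrow> complex"
  assumes "smooth f" "periodic2pi f"
  obtains f' where "\<And>x. (f has_vector_derivative f' x) (at x)" "smooth f'" "periodic2pi f'"
proof -
  obtain f' where d: "\<And>x. (f has_vector_derivative f' x) (at x)" and s: "smooth f'"
    using smooth_real_has_vector_derivative[OF assms(1)] by blast
  have "f' (x + 2 * pi) = f' x" for x
  proof -
    have "((\<lambda>y. y + 2 * pi) has_vector_derivative 1) (at x)"
      by (auto intro!: derivative_eq_intros)
    from vector_diff_chain_at[OF this d] have "((f \<circ> (\<lambda>y. y + 2 * pi)) has_vector_derivative f' (x + 2 * pi)) (at x)"
      by simp
    moreover have "f \<circ> (\<lambda>y. y + 2 * pi) = f" using assms(2) unfolding periodic2pi_def by auto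
    ultimately have "(f has_vector_derivative f' (x + 2 * pi)) (at x)" by simp
    then show ?thesis using d vector_derivative_unique_at by blast
  qed
  then show thesis using that d s unfolding periodic2pi_def by blast
qed

lemma smooth_periodic_fcoeff_power:
  fixes f :: "real \<Rightarrow> complex"
  assumes "smooth f" "periodic2pi f"
  shows "\<exists>g. continuous_on UNIV g \<and> (\<forall>k. fcoeff g k = (\<i> * of_int k) ^ n * fcoeff f k)"
proof -
  have "\<exists>g. smooth g \<and> periodic2pi g \<and> (\<forall>k. fcoeff g k = (\<i> * of_int k) ^ n * fcoeff f k)"
  proof (induction n)
    case 0
    show ?case using assms by (intro exI[of _ f]) simp
  next
    case (Suc n)
    then obtain g where g: "smooth g" "periodic2pi g" "\<And>k. fcoeff g k = (\<i> * of_int k) ^ n * fcoeff f k"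
      by blast
    obtain g' where "\<And>x. (g has_vector_derivative g' x) (at x)" "smooth g'" "periodic2pi g'"
      using smooth_periodic_derivative[OF g(1,2)] by blast
    moreover from this have "fcoeff g' k = \<i> * of_int k * fcoeff g k" for k
      by (intro fcoeff_deriv g(2))
    ultimately show ?case using g(3) by (intro exI[of _ g']) simp
  qed
  then show ?thesis using smooth_continuous_on by blast
qed

lemma one_plus_power_le: "(1 + t) ^ m \<le> 2 ^ m * (1 + t ^ m)" if "t \<ge> 0" for t :: real
proof -
  have "(1 + t) ^ m \<le> (2 * max 1 t) ^ m" using that by (intro power_mono) auto
  also have "\<dots> = 2 ^ m * (max 1 t) ^ m" by (simp add: power_mult_distrib)
  also have "\<dots> \<le> 2 ^ m * (1 + t ^ m)"
    using that by (intro mult_left_mono) (auto simp: max_def)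
  finally show ?thesis .
qed

lemma rapid_decay_fcoeff_smooth:
  fixes f :: "real \<Rightarrow> complex"
  assumes "smooth f" "periodic2pi f"
  shows "rapid_decay (fcoeff f)"
  unfolding rapid_decay_def
proof
  fix m
  have "\<exists>B. \<forall>k. \<bar>real_of_int k\<bar> ^ n * cmod (fcoeff f k) \<le> B" for n
  proof -
    obtain g where g: "continuous_on UNIV g" "\<And>k. fcoeff g k = (\<i> * of_int k) ^ n * fcoeff f k"
      using smooth_periodic_fcoeff_power[OF assms] by blast
    have gc: "continuous_on {0..2 * pi} g" using continuous_on_subset[OF g(1)] by blast
    obtain B where "\<And>x. x \<in> {0..2 * pi} \<Longrightarrow> norm (g x) \<le> B"
      using continuous_on_bounded_Icc[OF gc] by blast
    from norm_fcoeff_le[OF gc this] have "cmod (fcoeff g k) \<le> B" for k .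
    moreover have "cmod (fcoeff g k) = \<bar>real_of_int k\<bar> ^ n * cmod (fcoeff f k)" for k
      by (simp add: g(2) norm_mult norm_power)
    ultimately have "\<bar>real_of_int k\<bar> ^ n * cmod (fcoeff f k) \<le> B" for k by metis
    then show ?thesis by blast
  qed
  from this[of 0] this[of m] obtain B0 Bm where B0: "\<And>k. cmod (fcoeff f k) \<le> B0"
    and Bm: "\<And>k. \<bar>real_of_int k\<bar> ^ m * cmod (fcoeff f k) \<le> Bm"
    by auto
  have "(1 + \<bar>real_of_int k\<bar>) ^ m * cmod (fcoeff f k) \<le> 2 ^ m * (B0 + Bm)" for k
  proof -
    have "(1 + \<bar>real_of_int k\<bar>) ^ m * cmod (fcoeff f k) \<le> 2 ^ m * (1 + \<bar>real_of_int k\<bar> ^ m) * cmod (fcoeff f k)"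
      by (intro mult_right_mono one_plus_power_le) auto
    also have "\<dots> = 2 ^ m * (cmod (fcoeff f k) + \<bar>real_of_int k\<bar> ^ m * cmod (fcoeff f k))"
      by (simp add: algebra_simps)
    also have "\<dots> \<le> 2 ^ m * (B0 + Bm)" by (intro mult_left_mono add_mono B0 Bm) auto
    finally show ?thesis .
  qed
  then show "\<exists>B. \<forall>k. (1 + \<bar>real_of_int k\<bar>) ^ m * cmod (fcoeff f k) \<le> B" by blast
qed

section \<open>Fourier-Lebesgue norms control the L^2 norm\<close>

lemma infsum_mult_le_sqrt:
  fixes x y :: "'a \<Rightarrow> real"
  assumes x0: "\<And>k. x k \<ge> 0" and y0: "\<And>k. y k \<ge> 0"
    and xs: "(\<lambda>k. (x k)\<^sup>2) summable_on A" and ys: "(\<lambda>k. (y k)\<^sup>2) summable_on A"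
  shows "(\<lambda>k. x k * y k) summable_on A"
    and "(\<Sum>\<^sub>\<infinity>k\<in>A. x k * y k) \<le> sqrt (\<Sum>\<^sub>\<infinity>k\<in>A. (x k)\<^sup>2) * sqrt (\<Sum>\<^sub>\<infinity>k\<in>A. (y k)\<^sup>2)"
proof -
  show xy: "(\<lambda>k. x k * y k) summable_on A"
  proof (rule summable_on_comparison_test[OF summable_on_add[OF xs ys]])
    fix k
    have "0 \<le> (x k - y k)\<^sup>2" "0 \<le> x k * y k" using x0[of k] y0[of k] by auto
    moreover have "(x k - y k)\<^sup>2 = (x k)\<^sup>2 - 2 * (x k * y k) + (y k)\<^sup>2"
      by (simp add: power2_eq_square algebra_simps)
    ultimately show "x k * y k \<le> (x k)\<^sup>2 + (y k)\<^sup>2" by linarith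
  qed (simp add: x0 y0)
  show "(\<Sum>\<^sub>\<infinity>k\<in>A. x k * y k) \<le> sqrt (\<Sum>\<^sub>\<infinity>k\<in>A. (x k)\<^sup>2) * sqrt (\<Sum>\<^sub>\<infinity>k\<in>A. (y k)\<^sup>2)"
  proof (rule infsum_le_finite_sums[OF xy])
    fix F assume F: "finite F" "F \<subseteq> A"
    have "(\<Sum>k\<in>F. x k * y k) \<le> sqrt ((\<Sum>k\<in>F. (x k)\<^sup>2) * (\<Sum>k\<in>F. (y k)\<^sup>2))"
      using Cauchy_Schwarz_ineq_sum[of x y F] by (simp add: real_le_rsqrt)
    also have "\<dots> \<le> sqrt ((\<Sum>\<^sub>\<infinity>k\<in>A. (x k)\<^sup>2) * (\<Sum>\<^sub>\<infinity>k\<in>A. (y k)\<^sup>2))"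
      using F by (intro real_sqrt_le_mono mult_mono finite_sum_le_infsum xs ys sum_nonneg infsum_nonneg) auto
    finally show "(\<Sum>k\<in>F. x k * y k) \<le> sqrt (\<Sum>\<^sub>\<infinity>k\<in>A. (x k)\<^sup>2) * sqrt (\<Sum>\<^sub>\<infinity>k\<in>A. (y k)\<^sup>2)"
      by (simp add: real_sqrt_mult)
  qed
qed

lemma square_le_interpolation_normalized:
  fixes \<beta> \<kappa> s p :: real
  assumes p: "p > 2" and \<kappa>: "\<kappa> > 0" and \<beta>: "\<beta> \<ge> 0"
  shows "\<beta>\<^sup>2 * \<kappa> powr (- (2 * s)) \<le> \<beta> powr p + \<kappa> powr (- (2 * s * p / (p - 2)))"
proof -
  define r where "r = 2 * s / (p - 2)"
  have rp: "r * (p - 2) = 2 * s" and rs: "2 * s * p / (p - 2) = 2 * r + 2 * s"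
    using p unfolding r_def by (simp_all add: field_simps)
  define t where "t = \<kappa> powr (- r)"
  have t0: "t > 0" unfolding t_def using \<kappa> by simp
  have t_pow: "t powr (p - 2) = \<kappa> powr (- (2 * s))"
    unfolding t_def using rp by (simp add: powr_powr)
  have t_sq: "t\<^sup>2 * \<kappa> powr (- (2 * s)) = \<kappa> powr (- (2 * s * p / (p - 2)))"
    unfolding t_def rs power2_eq_square by (simp add: powr_add[symmetric])
  show ?thesis
  proof (cases "\<beta> \<le> t")
    case True
    then have "\<beta>\<^sup>2 * \<kappa> powr (- (2 * s)) \<le> t\<^sup>2 * \<kappa> powr (- (2 * s))"
      using \<beta> by (intro mult_right_mono power_mono) auto
    then show ?thesis unfolding t_sq using powr_ge_zero[of \<beta> p] by linarith
  next
    case False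
    then have "\<kappa> powr (- (2 * s)) \<le> \<beta> powr (p - 2)"
      unfolding t_pow[symmetric] using t0 p by (intro powr_mono2) auto
    then have "\<beta>\<^sup>2 * \<kappa> powr (- (2 * s)) \<le> \<beta> powr 2 * \<beta> powr (p - 2)"
      using \<beta> by (simp add: mult_left_mono)
    also have "\<dots> = \<beta> powr p" by (simp only: powr_add[symmetric]) simp
    finally show ?thesis using powr_ge_zero[of \<kappa> "- (2 * s * p / (p - 2))"] by linarith
  qed
qed

lemma square_le_interpolation:
  fixes c \<kappa> N s p :: real
  assumes p: "p > 2" and \<kappa>: "\<kappa> > 0" and N: "N > 0" and c: "c \<ge> 0"
  shows "c\<^sup>2 \<le> N powr (2 - p) * (\<kappa> powr s * c) powr p + N\<^sup>2 * \<kappa> powr (- (2 * s * p / (p - 2)))"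
proof -
  define \<beta> where "\<beta> = \<kappa> powr s * c / N"
  have \<beta>: "\<beta> \<ge> 0" unfolding \<beta>_def using c N by simp
  have "N\<^sup>2 * (\<beta>\<^sup>2 * \<kappa> powr (- (2 * s))) = c\<^sup>2 * (\<kappa> powr s * \<kappa> powr s * \<kappa> powr (- (2 * s)))"
    unfolding \<beta>_def using N by (simp add: power2_eq_square field_simps)
  also have "\<kappa> powr s * \<kappa> powr s * \<kappa> powr (- (2 * s)) = 1"
    using \<kappa> by (simp only: powr_add[symmetric]) simp
  finally have "c\<^sup>2 = N\<^sup>2 * (\<beta>\<^sup>2 * \<kappa> powr (- (2 * s)))" by simp
  also have "\<dots> \<le> N\<^sup>2 * (\<beta> powr p + \<kappa> powr (- (2 * s * p / (p - 2))))"
    by (intro mult_left_mono square_le_interpolation_normalized p \<kappa> \<beta>) simp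
  also have "\<dots> = N\<^sup>2 * \<beta> powr p + N\<^sup>2 * \<kappa> powr (- (2 * s * p / (p - 2)))"
    by (rule distrib_left)
  also have "N\<^sup>2 * \<beta> powr p = N powr (2 - p) * (\<kappa> powr s * c) powr p"
  proof -
    have "N\<^sup>2 = N powr 2" using N by simp
    then show ?thesis unfolding \<beta>_def powr_divide using N by (simp add: powr_diff)
  qed
  finally show ?thesis .
qed

definition FL_coeff_norm :: "real \<Rightarrow> real \<Rightarrow> (int \<Rightarrow> complex) \<Rightarrow> real" where
  "FL_coeff_norm s p a = (\<Sum>\<^sub>\<infinity>k\<in>UNIV - {0::int}. (\<bar>real_of_int k\<bar> powr s * cmod (a k)) powr p) powr (1 / p)"

lemma FL_norm_eq_FL_coeff_norm: "FL_norm s p f = FL_coeff_norm s p (fcoeff f)"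
  by (simp add: FL_norm_def FL_coeff_norm_def)

lemma summable_on_FL_terms:
  assumes a: "rapid_decay a" and p: "p \<ge> 2" and s: "s \<ge> 0"
  shows "(\<lambda>k. (\<bar>real_of_int k\<bar> powr s * cmod (a k)) powr p) summable_on A"
proof -
  define m where "m = nat \<lceil>s\<rceil>"
  obtain B where B: "\<And>k. (1 + \<bar>real_of_int k\<bar>) ^ (m + 1) * cmod (a k) \<le> B"
    using a unfolding rapid_decay_def by blast
  have "(\<lambda>k::int. B powr p * (1 + \<bar>real_of_int k\<bar>) powr (- 2)) summable_on UNIV"
    by (intro summable_on_cmult_right summable_on_one_plus_abs_int_powr) simp
  then have "(\<lambda>k. (\<bar>real_of_int k\<bar> powr s * cmod (a k)) powr p) summable_on UNIV"
  proof (rule summable_on_comparison_test)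
    fix k :: int
    let ?K = "1 + \<bar>real_of_int k\<bar>"
    have "\<bar>real_of_int k\<bar> powr s \<le> ?K powr s"
      using s by (intro powr_mono2) auto
    also have "\<dots> \<le> ?K powr real m"
      unfolding m_def by (intro powr_mono real_nat_ceiling_ge) auto
    also have "\<dots> = ?K ^ m" by (simp add: powr_realpow)
    finally have "\<bar>real_of_int k\<bar> powr s * cmod (a k) * ?K \<le> ?K ^ m * cmod (a k) * ?K"
      by (intro mult_right_mono) auto
    also have "\<dots> \<le> B" using B[of k] by (simp add: mult_ac)
    finally have "\<bar>real_of_int k\<bar> powr s * cmod (a k) \<le> B / ?K"
      by (simp add: pos_le_divide_eq)
    then have "(\<bar>real_of_int k\<bar> powr s * cmod (a k)) powr p \<le> (B / ?K) powr p"
      using p by (intro powr_mono2) auto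
    also have "\<dots> = B powr p * ?K powr (- p)"
      unfolding powr_minus powr_divide by (simp add: divide_inverse)
    also have "\<dots> \<le> B powr p * ?K powr (- 2)"
      using p by (intro mult_left_mono powr_mono) auto
    finally show "(\<bar>real_of_int k\<bar> powr s * cmod (a k)) powr p \<le> B powr p * ?K powr (- 2)" .
  qed simp
  then show ?thesis by (rule summable_on_subset_banach) auto
qed

lemma infsum_norm_squared_nonzero:
  "a 0 = 0 \<Longrightarrow> (\<Sum>\<^sub>\<infinity>k. (cmod (a k))\<^sup>2) = (\<Sum>\<^sub>\<infinity>k\<in>UNIV - {0::int}. (cmod (a k))\<^sup>2)"
  by (rule infsum_cong_neutral) auto

lemma FL_coeff_norm_powr:
  assumes "p > 0"
  shows "FL_coeff_norm s p a powr p = (\<Sum>\<^sub>\<infinity>k\<in>UNIV - {0}. (\<bar>real_of_int k\<bar> powr s * cmod (a k)) powr p)"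
  unfolding FL_coeff_norm_def using assms by (simp add: powr_powr infsum_nonneg)

lemma FL_coeff_norm_eq_0:
  assumes "FL_coeff_norm s p a = 0" "p > 0"
    and "(\<lambda>k. (\<bar>real_of_int k\<bar> powr s * cmod (a k)) powr p) summable_on UNIV - {0}"
    and "k \<noteq> 0"
  shows "a k = 0"
proof -
  have "(\<Sum>\<^sub>\<infinity>k\<in>UNIV - {0}. (\<bar>real_of_int k\<bar> powr s * cmod (a k)) powr p) = 0"
    using FL_coeff_norm_powr[OF assms(2), of s a] assms(1,2) by simp
  from nonneg_infsum_le_0D[OF _ assms(3) _ , of k] this assms(4) show ?thesis by auto
qed

lemma l2_le_FL_coeff_norm_2:
  assumes a: "rapid_decay a" and a0: "a 0 = 0" and s: "s \<ge> 0"
  shows "(\<Sum>\<^sub>\<infinity>k. (cmod (a k))\<^sup>2) \<le> (FL_coeff_norm s 2 a)\<^sup>2"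
proof -
  have "(\<Sum>\<^sub>\<infinity>k\<in>UNIV - {0}. (cmod (a k))\<^sup>2) \<le> (\<Sum>\<^sub>\<infinity>k\<in>UNIV - {0}. (\<bar>real_of_int k\<bar> powr s * cmod (a k)) powr 2)"
  proof (rule infsum_mono[OF rapid_decay_square_summable[OF a] summable_on_FL_terms[OF a _ s]])
    fix k :: int assume "k \<in> UNIV - {0}"
    then have "1 \<le> \<bar>real_of_int k\<bar> powr s" using s by (intro ge_one_powr_ge_zero) auto
    then have "cmod (a k) \<le> \<bar>real_of_int k\<bar> powr s * cmod (a k)"
      using mult_right_mono[of 1 _ "cmod (a k)"] by simp
    then show "(cmod (a k))\<^sup>2 \<le> (\<bar>real_of_int k\<bar> powr s * cmod (a k)) powr 2"
      by (simp add: power_mono)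
  qed simp
  also have "\<dots> = (FL_coeff_norm s 2 a)\<^sup>2"
    using FL_coeff_norm_powr[of 2 s a] by (simp add: powr_realpow FL_coeff_norm_def)
  finally show ?thesis using infsum_norm_squared_nonzero[of a, OF a0] by simp
qed

lemma FL_exponent_bounds:
  fixes s p :: real
  assumes p: "p > 2" and s: "s > 1/2 - 1/p"
  shows "s > 0" and "2 * s * p / (p - 2) > 1"
proof -
  have "1/p < 1/2" using p by (simp add: field_simps)
  then show "s > 0" using s by linarith
  have "s * (2 * p) > (1/2 - 1/p) * (2 * p)" using s p by (intro mult_strict_right_mono) auto
  also have "(1/2 - 1/p) * (2 * p) = p - 2" using p by (simp add: field_simps)
  finally show "2 * s * p / (p - 2) > 1" using p by (simp add: less_divide_eq mult_ac)
qed

lemma l2_le_FL_coeff_norm_gt_2: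
  assumes a: "rapid_decay a" and a0: "a 0 = 0" and p: "p > 2" and s: "s > 1/2 - 1/p"
  defines "\<sigma> \<equiv> 2 * s * p / (p - 2)"
  shows "(\<Sum>\<^sub>\<infinity>k. (cmod (a k))\<^sup>2)
    \<le> (1 + (\<Sum>\<^sub>\<infinity>k\<in>UNIV - {0::int}. \<bar>real_of_int k\<bar> powr (- \<sigma>))) * (FL_coeff_norm s p a)\<^sup>2"
proof -
  let ?A = "UNIV - {0::int}"
  let ?t = "\<lambda>k. (\<bar>real_of_int k\<bar> powr s * cmod (a k)) powr p"
  define N where "N = FL_coeff_norm s p a"
  define Z where "Z = (\<Sum>\<^sub>\<infinity>k\<in>?A. \<bar>real_of_int k\<bar> powr (- \<sigma>))"
  have s0: "s > 0" and "\<sigma> > 1" unfolding \<sigma>_def using p s by (rule FL_exponent_bounds)+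
  then have Zs: "(\<lambda>k::int. \<bar>real_of_int k\<bar> powr (- \<sigma>)) summable_on ?A"
    by (intro summable_on_subset_banach[OF summable_on_abs_int_powr]) auto
  have ts: "?t summable_on ?A" using summable_on_FL_terms[OF a] p s0 by simp
  have NpT: "N powr p = (\<Sum>\<^sub>\<infinity>k\<in>?A. ?t k)" unfolding N_def using p by (intro FL_coeff_norm_powr) simp
  have N0: "N \<ge> 0" unfolding N_def FL_coeff_norm_def by simp
  show ?thesis
  proof (cases "N = 0")
    case True
    then have "(\<Sum>\<^sub>\<infinity>k\<in>?A. (cmod (a k))\<^sup>2) = 0"
      using FL_coeff_norm_eq_0[of s p a, OF _ _ ts] p unfolding N_def by (intro infsum_0) auto
    then show ?thesis using infsum_norm_squared_nonzero[of a, OF a0] True N_def by simp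
  next
    case False
    then have Npos: "N > 0" using N0 by simp
    have "(\<Sum>\<^sub>\<infinity>k\<in>?A. (cmod (a k))\<^sup>2) \<le> (\<Sum>\<^sub>\<infinity>k\<in>?A. N powr (2 - p) * ?t k + N\<^sup>2 * \<bar>real_of_int k\<bar> powr (- \<sigma>))"
    proof (rule infsum_mono[OF rapid_decay_square_summable[OF a]])
      show "(\<lambda>k. N powr (2 - p) * ?t k + N\<^sup>2 * \<bar>real_of_int k\<bar> powr (- \<sigma>)) summable_on ?A"
        by (intro summable_on_add summable_on_cmult_right ts Zs)
      fix k assume "k \<in> ?A"
      then show "(cmod (a k))\<^sup>2 \<le> N powr (2 - p) * ?t k + N\<^sup>2 * \<bar>real_of_int k\<bar> powr (- \<sigma>)"
        unfolding \<sigma>_def by (intro square_le_interpolation p Npos) auto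
    qed
    also have "\<dots> = N powr (2 - p) * N powr p + N\<^sup>2 * Z"
      unfolding Z_def NpT
      by (subst infsum_add) (auto intro!: summable_on_cmult_right ts Zs simp: infsum_cmult_right')
    also have "N powr (2 - p) * N powr p = N\<^sup>2"
      using Npos by (simp add: powr_add[symmetric])
    finally show ?thesis
      using infsum_norm_squared_nonzero[of a, OF a0] unfolding N_def Z_def by (simp add: algebra_simps)
  qed
qed

lemma l2_le_FL_coeff_norm:
  assumes "(s > 1/2 - 1/p \<and> p > 2) \<or> (s \<ge> 0 \<and> p = 2)"
  obtains K where "K \<ge> 0"
    "\<And>a. rapid_decay a \<Longrightarrow> a 0 = 0 \<Longrightarrow> (\<Sum>\<^sub>\<infinity>k. (cmod (a k))\<^sup>2) \<le> K * (FL_coeff_norm s p a)\<^sup>2"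
  using assms
proof (elim disjE conjE)
  assume "s > 1/2 - 1/p" "p > 2"
  then show thesis
    using l2_le_FL_coeff_norm_gt_2
    by (intro that[of "1 + (\<Sum>\<^sub>\<infinity>k\<in>UNIV - {0::int}. \<bar>real_of_int k\<bar> powr (- (2 * s * p / (p - 2))))"])
       (auto intro!: add_nonneg_nonneg infsum_nonneg)
next
  assume "s \<ge> 0" "p = 2"
  then show thesis using l2_le_FL_coeff_norm_2 by (intro that[of 1]) auto
qed

section \<open>The Hopf-Cole transform\<close>

lemma has_vector_derivative_quotient:
  fixes f g :: "real \<Rightarrow> complex"
  assumes f: "(f has_vector_derivative f') (at x)" and g: "(g has_vector_derivative g') (at x)"
    and g0: "g x \<noteq> 0"
  shows "((\<lambda>y. f y / g y) has_vector_derivative (f' / g x - f x * g' / (g x)\<^sup>2)) (at x)"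
proof -
  have "((inverse \<circ> g) has_vector_derivative (g' * (- (inverse (g x) ^ Suc (Suc 0))))) (at x)"
    by (rule field_vector_diff_chain_at[OF g DERIV_inverse[OF g0]])
  from has_vector_derivative_mult[OF f this[unfolded o_def]]
  have "((\<lambda>y. f y * inverse (g y)) has_vector_derivative
      f x * (g' * - (inverse (g x) ^ Suc (Suc 0))) + f' * inverse (g x)) (at x)" .
  moreover have "f x * (g' * - (inverse (g x) ^ Suc (Suc 0))) + f' * inverse (g x)
      = f' / g x - f x * g' / (g x)\<^sup>2"
    using g0 by (simp add: field_simps power2_eq_square)
  ultimately show ?thesis by (simp add: divide_inverse power2_eq_square mult.assoc)
qed

lemma hopf_cole_transform:
  fixes w wx wxx wxxx :: "real \<Rightarrow> real \<Rightarrow> complex"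
  assumes nz: "\<And>\<tau> y. w \<tau> y \<noteq> 0"
    and w_x: "\<And>y. ((\<lambda>y. w t y) has_vector_derivative wx t y) (at y)"
    and wx_x: "\<And>y. ((\<lambda>y. wx t y) has_vector_derivative wxx t y) (at y)"
    and wxx_x: "\<And>y. ((\<lambda>y. wxx t y) has_vector_derivative wxxx t y) (at y)"
    and w_t: "((\<lambda>\<tau>. w \<tau> x) has_vector_derivative \<i> * wxx t x) (at t)"
    and wx_t: "((\<lambda>\<tau>. wx \<tau> x) has_vector_derivative \<i> * wxxx t x) (at t)"
  defines "u \<equiv> \<lambda>t x. 2 * \<i> * wx t x / w t x"
  shows "vector_derivative (\<lambda>\<tau>. u \<tau> x) (at t) =
      \<i> * vector_derivative (\<lambda>y. vector_derivative (\<lambda>z. u t z) (at y)) (at x)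
      + u t x * vector_derivative (\<lambda>y. u t y) (at x)"
proof -
  define P where "P y = wx t y / w t y" for y
  define Q where "Q y = wxx t y / w t y" for y
  define R where "R y = wxxx t y / w t y" for y
  have P_x: "(P has_vector_derivative (Q y - P y * P y)) (at y)" for y
    using has_vector_derivative_quotient[OF wx_x w_x nz, of y]
    unfolding P_def Q_def using nz[of t y] by (simp add: field_simps power2_eq_square)
  have Q_x: "(Q has_vector_derivative (R y - Q y * P y)) (at y)" for y
    using has_vector_derivative_quotient[OF wxx_x w_x nz, of y]
    unfolding P_def Q_def R_def using nz[of t y] by (simp add: field_simps power2_eq_square)
  have u_eq: "u t = (\<lambda>y. 2 * \<i> * P y)" unfolding P_def u_def by (simp add: fun_eq_iff)
  have u_x: "vector_derivative (\<lambda>z. u t z) (at y) = 2 * \<i> * (Q y - P y * P y)" for y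
    unfolding u_eq by (rule vector_derivative_at) (intro has_vector_derivative_mult_right P_x)
  have u_xx: "vector_derivative (\<lambda>y. vector_derivative (\<lambda>z. u t z) (at y)) (at x)
      = 2 * \<i> * ((R x - Q x * P x) - (P x * (Q x - P x * P x) + (Q x - P x * P x) * P x))"
    unfolding u_x by (rule vector_derivative_at)
      (intro has_vector_derivative_mult_right has_vector_derivative_diff Q_x has_vector_derivative_mult P_x)
  have "((\<lambda>\<tau>. wx \<tau> x / w \<tau> x) has_vector_derivative \<i> * (R x - P x * Q x)) (at t)"
    using has_vector_derivative_quotient[OF wx_t w_t nz]
    unfolding P_def Q_def R_def using nz[of t x] by (simp add: field_simps power2_eq_square)
  from has_vector_derivative_mult_right[OF this, of "2 * \<i>"]
  have u_t: "vector_derivative (\<lambda>\<tau>. u \<tau> x) (at t) = 2 * \<i> * (\<i> * (R x - P x * Q x))"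
    unfolding u_def times_divide_eq_right[symmetric] by (rule vector_derivative_at)
  have u: "u t x = 2 * \<i> * P x" by (simp add: u_eq)
  \<comment> \<open>in terms of P, Q, R both sides equal -2 (R - P Q)\<close>
  show ?thesis unfolding u_t unfolding u_xx unfolding u unfolding u_x by (simp add: algebra_simps)
qed

lemma free_wave_coeff_dt: "free_wave (coeff_dt a) z = \<i> * free_wave (coeff_dx (coeff_dx a)) z"
  unfolding coeff_dt_eq by (rule free_wave_cmult)

lemma smooth_global_solution_hopf_cole:
  assumes b: "rapid_decay b" and nz: "\<And>z. free_wave b z \<noteq> 0"
  shows "smooth_global_solution (\<lambda>t x. 2 * \<i> * free_wave (coeff_dx b) (t, x) / free_wave b (t, x))"
  unfolding smooth_global_solution_def
proof (intro conjI allI)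
  have "(\<lambda>(t, x). 2 * \<i> * free_wave (coeff_dx b) (t, x) / free_wave b (t, x))
      = (\<lambda>z. (2 * \<i>) * free_wave (coeff_dx b) z * inverse (free_wave b z))"
    by (auto simp: divide_inverse)
  then show "smooth (\<lambda>(t, x). 2 * \<i> * free_wave (coeff_dx b) (t, x) / free_wave b (t, x))"
    by (simp only:) (intro smooth_mult smooth_cmult smooth_free_wave smooth_inverse rapid_decay_coeff_dx b nz)
  show "periodic2pi (\<lambda>x. 2 * \<i> * free_wave (coeff_dx b) (t, x) / free_wave b (t, x))" for t
    unfolding periodic2pi_def by (simp add: free_wave_periodic)
  fix t x
  have "rapid_decay (coeff_dx b)" "rapid_decay (coeff_dx (coeff_dx b))"
    "rapid_decay (coeff_dx (coeff_dx (coeff_dx b)))"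
    using b by (simp_all add: rapid_decay_coeff_dx)
  note r = b this
  show "vector_derivative (\<lambda>\<tau>. 2 * \<i> * free_wave (coeff_dx b) (\<tau>, x) / free_wave b (\<tau>, x)) (at t) =
      \<i> * vector_derivative (\<lambda>y. vector_derivative (\<lambda>z. 2 * \<i> * free_wave (coeff_dx b) (t, z) / free_wave b (t, z)) (at y)) (at x)
      + 2 * \<i> * free_wave (coeff_dx b) (t, x) / free_wave b (t, x)
        * vector_derivative (\<lambda>y. 2 * \<i> * free_wave (coeff_dx b) (t, y) / free_wave b (t, y)) (at x)"
    by (rule hopf_cole_transform[OF nz free_wave_has_vector_derivative_x[OF r(1)]
          free_wave_has_vector_derivative_x[OF r(2)] free_wave_has_vector_derivative_x[OF r(3)]
          free_wave_has_vector_derivative_t[OF r(1), unfolded free_wave_coeff_dt]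
          free_wave_has_vector_derivative_t[OF r(2), unfolded free_wave_coeff_dt]])
qed

section \<open>Global solutions for small data\<close>

definition inverse_square_sum :: real where
  "inverse_square_sum = (\<Sum>\<^sub>\<infinity>k::int. (1 / \<bar>real_of_int k\<bar>)\<^sup>2)"

lemma inverse_square_sum_nonneg: "inverse_square_sum \<ge> 0"
  unfolding inverse_square_sum_def by (intro infsum_nonneg) auto

lemma infsum_norm_div_abs_le:
  assumes "rapid_decay c"
  shows "(\<Sum>\<^sub>\<infinity>k. cmod (c k) * (1 / \<bar>real_of_int k\<bar>))
    \<le> sqrt (\<Sum>\<^sub>\<infinity>k. (cmod (c k))\<^sup>2) * sqrt inverse_square_sum"
  unfolding inverse_square_sum_def
  by (rule infsum_mult_le_sqrt(2)[OF _ _ rapid_decay_square_summable[OF assms]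
        summable_on_inverse_abs_int_squared]) auto

text \<open>Division by zero makes coeff_primitive a 0 = 0, the normalisation of the mean-zero
  primitive J.\<close>

definition coeff_primitive :: "(int \<Rightarrow> complex) \<Rightarrow> int \<Rightarrow> complex" where
  "coeff_primitive a k = a k / (\<i> * of_int k)"

lemma norm_coeff_primitive: "cmod (coeff_primitive a k) = cmod (a k) * (1 / \<bar>real_of_int k\<bar>)"
  by (simp add: coeff_primitive_def norm_divide norm_mult)

lemma rapid_decay_coeff_primitive:
  assumes "rapid_decay a"
  shows "rapid_decay (coeff_primitive a)"
proof (rule rapid_decay_dominated[OF assms, where j=0 and C=1])
  fix k
  have "cmod (a k) * (1 / \<bar>real_of_int k\<bar>) \<le> cmod (a k)"
  proof (cases "k = 0")
    case False
    then have "1 \<le> \<bar>real_of_int k\<bar>" by linarith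
    then show ?thesis by (simp add: divide_le_eq mult_le_cancel_left1)
  qed simp
  then show "cmod (coeff_primitive a k) \<le> (1 + \<bar>real_of_int k\<bar>) ^ 0 * 1 * cmod (a k)"
    by (simp add: norm_coeff_primitive)
qed

lemma coeff_dx_coeff_primitive: "a 0 = 0 \<Longrightarrow> coeff_dx (coeff_primitive a) = a"
  by (auto simp: fun_eq_iff coeff_dx_def coeff_primitive_def)

lemma Jprim_eq_free_wave: "Jprim f x = free_wave (coeff_primitive (fcoeff f)) (0, x)"
  unfolding Jprim_def free_wave_def
  by (rule infsum_cong_neutral) (auto simp: coeff_primitive_def wave_mode_0)

lemma norm_free_wave_coeff_primitive_le:
  assumes "rapid_decay a"
  shows "cmod (free_wave (coeff_primitive a) z) \<le> sqrt (\<Sum>\<^sub>\<infinity>k. (cmod (a k))\<^sup>2) * sqrt inverse_square_sum"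
  using norm_free_wave_le[OF rapid_decay_coeff_primitive[OF assms], of z] infsum_norm_div_abs_le[OF assms]
  unfolding norm_coeff_primitive by linarith

lemma norm_free_wave_minus_mean_le:
  assumes b: "rapid_decay b"
  shows "cmod (free_wave b z - b 0)
    \<le> sqrt (\<Sum>\<^sub>\<infinity>k. (cmod (coeff_dx b k))\<^sup>2) * sqrt inverse_square_sum"
proof -
  let ?c = "\<lambda>k. if k = 0 then 0 else b k"
  have c: "rapid_decay ?c" by (rule rapid_decay_dominated[OF b, where j=0 and C=1]) auto
  let ?d = "\<lambda>k. if k = 0 then b 0 else 0"
  have d: "rapid_decay ?d" by (rule rapid_decay_dominated[OF b, where j=0 and C=1]) auto
  have "free_wave ?d z = b 0"
    unfolding free_wave_def by (intro infsumI has_sum_finite_neutralI[of "{0}"]) (auto simp: wave_mode_def)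
  moreover have "(\<lambda>k. ?c k + ?d k) = b" by auto
  then have "free_wave b z = free_wave (\<lambda>k. ?c k + ?d k) z" by simp
  ultimately have "free_wave b z - b 0 = free_wave ?c z" using free_wave_add[OF c d] by simp
  also have "cmod \<dots> \<le> (\<Sum>\<^sub>\<infinity>k. cmod (?c k))" by (rule norm_free_wave_le[OF c])
  also have "\<dots> = (\<Sum>\<^sub>\<infinity>k. cmod (coeff_dx b k) * (1 / \<bar>real_of_int k\<bar>))"
    by (rule infsum_cong) (simp add: coeff_dx_def norm_mult)
  also have "\<dots> \<le> sqrt (\<Sum>\<^sub>\<infinity>k. (cmod (coeff_dx b k))\<^sup>2) * sqrt inverse_square_sum"
    by (rule infsum_norm_div_abs_le[OF rapid_decay_coeff_dx[OF b]])
  finally show ?thesis .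
qed

lemma smooth_periodic_fourier_expansion:
  assumes "smooth f" "periodic2pi f"
  shows "rapid_decay (fcoeff f)" and "f x = free_wave (fcoeff f) (0, x)"
  using rapid_decay_fcoeff_smooth[OF assms]
    fourier_inversion[OF smooth_continuous_on[OF assms(1)] assms(2)] by auto

lemma Jprim_has_vector_derivative:
  assumes "smooth \<phi>" "periodic2pi \<phi>" "mean_zero \<phi>"
  shows "(Jprim \<phi> has_vector_derivative \<phi> x) (at x)"
proof -
  have a: "rapid_decay (fcoeff \<phi>)" using smooth_periodic_fourier_expansion[OF assms(1,2)] by blast
  have "coeff_dx (coeff_primitive (fcoeff \<phi>)) = fcoeff \<phi>"
    using assms(3) by (intro coeff_dx_coeff_primitive) (simp add: mean_zero_def)
  moreover have "\<phi> x = free_wave (fcoeff \<phi>) (0, x)" by (rule smooth_periodic_fourier_expansion(2)[OF assms(1,2)])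
  ultimately show ?thesis
    using free_wave_has_vector_derivative_x[OF rapid_decay_coeff_primitive[OF a], of 0 x]
    unfolding Jprim_eq_free_wave[abs_def] by simp
qed

lemma norm_Jprim_le_SUP:
  assumes "rapid_decay (fcoeff \<phi>)"
  shows "cmod (Jprim \<phi> x) \<le> (SUP y. cmod (Jprim \<phi> y))"
    and "(SUP y. cmod (Jprim \<phi> y))
      \<le> sqrt (\<Sum>\<^sub>\<infinity>k. (cmod (fcoeff \<phi> k))\<^sup>2) * sqrt inverse_square_sum"
proof -
  have bound: "cmod (Jprim \<phi> y) \<le> sqrt (\<Sum>\<^sub>\<infinity>k. (cmod (fcoeff \<phi> k))\<^sup>2) * sqrt inverse_square_sum" for y
    unfolding Jprim_eq_free_wave by (rule norm_free_wave_coeff_primitive_le[OF assms])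
  then show "cmod (Jprim \<phi> x) \<le> (SUP y. cmod (Jprim \<phi> y))"
    by (intro cSUP_upper bdd_aboveI2) auto
  show "(SUP y. cmod (Jprim \<phi> y)) \<le> sqrt (\<Sum>\<^sub>\<infinity>k. (cmod (fcoeff \<phi> k))\<^sup>2) * sqrt inverse_square_sum"
    using bound by (intro cSUP_least) auto
qed

text \<open>Chosen so that 2 i w' / w = phi: the Hopf-Cole transform of its free evolution starts at phi.\<close>

definition gauge_datum :: "(real \<Rightarrow> complex) \<Rightarrow> real \<Rightarrow> complex" where
  "gauge_datum \<phi> x = exp (- (\<i> / 2) * Jprim \<phi> x)"

lemma norm_gauge_datum: "cmod (gauge_datum \<phi> x) = exp (Im (Jprim \<phi> x) / 2)"
  unfolding gauge_datum_def by simp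

lemma gauge_datum_has_vector_derivative:
  assumes "smooth \<phi>" "periodic2pi \<phi>" "mean_zero \<phi>"
  shows "(gauge_datum \<phi> has_vector_derivative (- (\<i> / 2) * \<phi> x * gauge_datum \<phi> x)) (at x)"
proof -
  have "((\<lambda>x. - (\<i> / 2) * Jprim \<phi> x) has_vector_derivative - (\<i> / 2) * \<phi> x) (at x)"
    by (rule has_vector_derivative_mult_right[OF Jprim_has_vector_derivative[OF assms]])
  from field_vector_diff_chain_at[OF this DERIV_exp]
  have "((\<lambda>x. exp (- (\<i> / 2) * Jprim \<phi> x)) has_vector_derivative
      - (\<i> / 2) * \<phi> x * exp (- (\<i> / 2) * Jprim \<phi> x)) (at x)"
    by (simp only: o_def)
  then show ?thesis unfolding gauge_datum_def[abs_def] .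
qed

lemma smooth_periodic_gauge_datum:
  assumes "smooth \<phi>" "periodic2pi \<phi>"
  shows "smooth (gauge_datum \<phi>)" "periodic2pi (gauge_datum \<phi>)"
proof -
  have a: "rapid_decay (fcoeff \<phi>)" using smooth_periodic_fourier_expansion[OF assms] by blast
  have "bounded_linear (\<lambda>x::real. (0::real, x))"
    by (intro bounded_linear_Pair bounded_linear_zero bounded_linear_ident)
  from smooth_compose_linear[OF smooth_free_wave[OF rapid_decay_coeff_primitive[OF a]] this]
  show "smooth (gauge_datum \<phi>)"
    unfolding gauge_datum_def[abs_def] Jprim_eq_free_wave by (intro smooth_exp smooth_cmult)
  show "periodic2pi (gauge_datum \<phi>)"
    unfolding periodic2pi_def gauge_datum_def Jprim_eq_free_wave by (simp add: free_wave_periodic)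
qed

lemma free_wave_coeff_dx_gauge_datum:
  assumes "smooth \<phi>" "periodic2pi \<phi>" "mean_zero \<phi>"
  shows "free_wave (coeff_dx (fcoeff (gauge_datum \<phi>))) (0, x) = - (\<i> / 2) * \<phi> x * gauge_datum \<phi> x"
proof -
  let ?b = "fcoeff (gauge_datum \<phi>)"
  have b: "rapid_decay ?b"
    by (rule smooth_periodic_fourier_expansion(1)[OF smooth_periodic_gauge_datum[OF assms(1,2)]])
  have w0: "gauge_datum \<phi> = (\<lambda>x. free_wave ?b (0, x))"
    by (intro ext smooth_periodic_fourier_expansion(2)[OF smooth_periodic_gauge_datum[OF assms(1,2)]])
  have "(gauge_datum \<phi> has_vector_derivative free_wave (coeff_dx ?b) (0, x)) (at x)"
    using free_wave_has_vector_derivative_x[OF b, of 0 x] by (subst w0)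
  then show ?thesis
    using gauge_datum_has_vector_derivative[OF assms] vector_derivative_unique_at by blast
qed

lemma gauge_datum_coeff_dx_bound:
  assumes "smooth \<phi>" "periodic2pi \<phi>" "mean_zero \<phi>"
  defines "b \<equiv> fcoeff (gauge_datum \<phi>)"
  shows "(\<Sum>\<^sub>\<infinity>k. (cmod (coeff_dx b k))\<^sup>2)
    \<le> exp (SUP y. cmod (Jprim \<phi> y)) * (\<Sum>\<^sub>\<infinity>k. (cmod (fcoeff \<phi> k))\<^sup>2) / 4"
proof -
  let ?M = "SUP y. cmod (Jprim \<phi> y)"
  have a: "rapid_decay (fcoeff \<phi>)" using smooth_periodic_fourier_expansion[OF assms(1,2)] by blast
  have b: "rapid_decay b" unfolding b_def using smooth_periodic_fourier_expansion[OF smooth_periodic_gauge_datum[OF assms(1,2)]] by blast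
  have \<phi>c: "continuous_on {0..2 * pi} \<phi>" by (rule smooth_continuous_on[OF assms(1)])
  have deriv: "free_wave (coeff_dx b) (0, x) = - (\<i> / 2) * \<phi> x * gauge_datum \<phi> x" for x
    unfolding b_def by (rule free_wave_coeff_dx_gauge_datum[OF assms(1-3)])
  have gauge_le: "(cmod (gauge_datum \<phi> x))\<^sup>2 \<le> exp ?M" for x
  proof -
    have "Im (Jprim \<phi> x) \<le> ?M"
      using abs_Im_le_cmod[of "Jprim \<phi> x"] norm_Jprim_le_SUP(1)[OF a, of x] by linarith
    then have "(cmod (gauge_datum \<phi> x))\<^sup>2 \<le> (exp (?M / 2))\<^sup>2"
      unfolding norm_gauge_datum by (intro power_mono) auto
    then show ?thesis by (simp add: power2_eq_square exp_add[symmetric])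
  qed
  have "(cmod (free_wave (coeff_dx b) (0, x)))\<^sup>2 = (cmod (\<phi> x))\<^sup>2 * (cmod (gauge_datum \<phi> x))\<^sup>2 / 4" for x
    unfolding deriv by (simp add: norm_mult power_mult_distrib power_divide)
  also have "\<dots> x \<le> (cmod (\<phi> x))\<^sup>2 * (exp ?M / 4)" for x
    using mult_left_mono[OF gauge_le[of x], of "(cmod (\<phi> x))\<^sup>2"] by simp
  finally have "(cmod (free_wave (coeff_dx b) (0, x)))\<^sup>2 \<le> (cmod (\<phi> x))\<^sup>2 * (exp ?M / 4)" for x .
  then have "integral {0..2 * pi} (\<lambda>x. (cmod (free_wave (coeff_dx b) (0, x)))\<^sup>2)
      \<le> integral {0..2 * pi} (\<lambda>x. (cmod (\<phi> x))\<^sup>2 * (exp ?M / 4))"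
    by (intro integral_le integrable_continuous_interval continuous_intros \<phi>c
        continuous_on_free_wave_slice rapid_decay_coeff_dx b)
  also have "\<dots> = exp ?M / 4 * (2 * pi * (\<Sum>\<^sub>\<infinity>k. (cmod (fcoeff \<phi> k))\<^sup>2))"
    using integral_norm_free_wave_squared[OF a, of 0] smooth_periodic_fourier_expansion(2)[OF assms(1,2)]
    by (simp add: mult.commute)
  finally show ?thesis
    using integral_norm_free_wave_squared[OF rapid_decay_coeff_dx[OF b], of 0] by (simp add: field_simps)
qed

lemma norm_free_wave_lower_bound:
  assumes b: "rapid_decay b"
  shows "cmod (free_wave b z)
    \<ge> cmod (free_wave b z') - 2 * (sqrt (\<Sum>\<^sub>\<infinity>k. (cmod (coeff_dx b k))\<^sup>2) * sqrt inverse_square_sum)"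
  using norm_free_wave_minus_mean_le[OF b, of z] norm_free_wave_minus_mean_le[OF b, of z']
    norm_triangle_ineq2[of "free_wave b z'" "b 0"] norm_triangle_ineq2[of "b 0" "free_wave b z"]
    norm_minus_commute[of "b 0" "free_wave b z"]
  by linarith

lemma L2_norm_hopf_cole_le:
  assumes b: "rapid_decay b" and low: "\<And>z. cmod (free_wave b z) \<ge> 1/2"
  shows "L2_norm (\<lambda>x. 2 * \<i> * free_wave (coeff_dx b) (t, x) / free_wave b (t, x))
    \<le> sqrt (32 * pi * (\<Sum>\<^sub>\<infinity>k. (cmod (coeff_dx b k))\<^sup>2))"
proof -
  have nz: "free_wave b z \<noteq> 0" for z using low[of z] by force
  have "(cmod (2 * \<i> * free_wave (coeff_dx b) (t, x) / free_wave b (t, x)))\<^sup>2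
      \<le> 16 * (cmod (free_wave (coeff_dx b) (t, x)))\<^sup>2" for x
  proof -
    have "cmod (free_wave (coeff_dx b) (t, x)) * 1 \<le> cmod (free_wave (coeff_dx b) (t, x)) * (2 * cmod (free_wave b (t, x)))"
      using low[of "(t, x)"] by (intro mult_left_mono) auto
    then have "cmod (2 * \<i> * free_wave (coeff_dx b) (t, x) / free_wave b (t, x))
        \<le> 4 * cmod (free_wave (coeff_dx b) (t, x))"
      using nz[of "(t, x)"] by (simp add: norm_mult norm_divide divide_le_eq mult_ac)
    from power_mono[OF this, of 2] show ?thesis by (simp add: power_mult_distrib)
  qed
  then have "integral {0..2 * pi} (\<lambda>x. (cmod (2 * \<i> * free_wave (coeff_dx b) (t, x) / free_wave b (t, x)))\<^sup>2)
      \<le> integral {0..2 * pi} (\<lambda>x. 16 * (cmod (free_wave (coeff_dx b) (t, x)))\<^sup>2)"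
    by (intro integral_le integrable_continuous_interval continuous_intros continuous_on_free_wave_slice
        rapid_decay_coeff_dx b) (simp_all add: nz)
  also have "\<dots> = 32 * pi * (\<Sum>\<^sub>\<infinity>k. (cmod (coeff_dx b k))\<^sup>2)"
    using integral_norm_free_wave_squared[OF rapid_decay_coeff_dx[OF b], of t] by simp
  finally show ?thesis unfolding L2_norm_def by simp
qed

lemma gauge_datum_small:
  assumes \<phi>: "smooth \<phi>" "periodic2pi \<phi>" "mean_zero \<phi>"
    and small: "sqrt inverse_square_sum * sqrt (\<Sum>\<^sub>\<infinity>k. (cmod (fcoeff \<phi> k))\<^sup>2) \<le> 1/8"
  shows "(SUP x. cmod (Jprim \<phi> x)) \<le> 1/8"
    and "(\<Sum>\<^sub>\<infinity>k. (cmod (coeff_dx (fcoeff (gauge_datum \<phi>)) k))\<^sup>2) \<le> (\<Sum>\<^sub>\<infinity>k. (cmod (fcoeff \<phi> k))\<^sup>2)"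
proof -
  let ?M = "SUP x. cmod (Jprim \<phi> x)"
  let ?A = "\<Sum>\<^sub>\<infinity>k. (cmod (fcoeff \<phi> k))\<^sup>2"
  have a: "rapid_decay (fcoeff \<phi>)" using smooth_periodic_fourier_expansion[OF \<phi>(1,2)] by blast
  show M8: "?M \<le> 1/8"
    using norm_Jprim_le_SUP(2)[OF a] small by (simp add: mult.commute)
  have "exp ?M \<le> exp 1" using M8 by simp
  then have "exp ?M \<le> 4" using exp_le by linarith
  then have "exp ?M * ?A \<le> 4 * ?A" by (intro mult_right_mono infsum_nonneg) auto
  then show "(\<Sum>\<^sub>\<infinity>k. (cmod (coeff_dx (fcoeff (gauge_datum \<phi>)) k))\<^sup>2) \<le> ?A"
    using gauge_datum_coeff_dx_bound[OF \<phi>] by simp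
qed

lemma norm_free_wave_gauge_datum_ge_half:
  assumes \<phi>: "smooth \<phi>" "periodic2pi \<phi>" "mean_zero \<phi>"
    and small: "sqrt inverse_square_sum * sqrt (\<Sum>\<^sub>\<infinity>k. (cmod (fcoeff \<phi> k))\<^sup>2) \<le> 1/8"
  shows "cmod (free_wave (fcoeff (gauge_datum \<phi>)) z) \<ge> 1/2"
proof -
  define M where "M = (SUP x. cmod (Jprim \<phi> x))"
  define b where "b = fcoeff (gauge_datum \<phi>)"
  have b: "rapid_decay b" and w0: "gauge_datum \<phi> 0 = free_wave b (0, 0)"
    unfolding b_def using smooth_periodic_fourier_expansion[OF smooth_periodic_gauge_datum[OF \<phi>(1,2)]] by auto
  have "sqrt (\<Sum>\<^sub>\<infinity>k. (cmod (coeff_dx b k))\<^sup>2) * sqrt inverse_square_sum \<le> 1/8"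
    using small mult_right_mono[OF real_sqrt_le_mono[OF gauge_datum_small(2)[OF \<phi> small]],
        of "sqrt inverse_square_sum"]
    unfolding b_def by (simp add: inverse_square_sum_nonneg mult.commute)
  moreover have "- M \<le> Im (Jprim \<phi> 0)"
    using norm_Jprim_le_SUP(1)[OF smooth_periodic_fourier_expansion(1)[OF \<phi>(1,2)], of 0] abs_Im_le_cmod[of "Jprim \<phi> 0"]
    unfolding M_def by linarith
  then have "exp (- M / 2) \<le> cmod (free_wave b (0, 0))"
    unfolding w0[symmetric] norm_gauge_datum by simp
  moreover have "1 - M / 2 \<le> exp (- M / 2)" using exp_ge_add_one_self[of "- M / 2"] by simp
  moreover have "M \<le> 1/8" unfolding M_def by (rule gauge_datum_small(1)[OF \<phi> small])
  ultimately show ?thesis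
    using norm_free_wave_lower_bound[OF b, where z=z and z'="(0, 0)"] unfolding b_def by linarith
qed

lemma small_data_global_solution:
  fixes \<phi> :: "real \<Rightarrow> complex"
  assumes \<phi>: "smooth \<phi>" "periodic2pi \<phi>" "mean_zero \<phi>"
    and small: "sqrt inverse_square_sum * sqrt (\<Sum>\<^sub>\<infinity>k. (cmod (fcoeff \<phi> k))\<^sup>2) \<le> 1/8"
  shows "\<exists>u. smooth_global_solution u \<and> u 0 = \<phi> \<and>
    (\<forall>t. L2_norm (u t) \<le> sqrt (8 * pi * exp (SUP x. cmod (Jprim \<phi> x)) * (\<Sum>\<^sub>\<infinity>k. (cmod (fcoeff \<phi> k))\<^sup>2)))"
proof -
  define b where "b = fcoeff (gauge_datum \<phi>)"
  have b: "rapid_decay b" and w0: "\<And>x. gauge_datum \<phi> x = free_wave b (0, x)"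
    unfolding b_def using smooth_periodic_fourier_expansion[OF smooth_periodic_gauge_datum[OF \<phi>(1,2)]] by auto
  have low: "cmod (free_wave b z) \<ge> 1/2" for z
    unfolding b_def by (rule norm_free_wave_gauge_datum_ge_half[OF \<phi> small])
  then have nz: "free_wave b z \<noteq> 0" for z using low[of z] by force
  define u where "u t x = 2 * \<i> * free_wave (coeff_dx b) (t, x) / free_wave b (t, x)" for t x
  have "smooth_global_solution u"
    unfolding u_def[abs_def] by (rule smooth_global_solution_hopf_cole[OF b nz])
  moreover have "u 0 x = \<phi> x" for x
  proof -
    have "gauge_datum \<phi> x \<noteq> 0" by (simp add: gauge_datum_def)
    then show ?thesis
      unfolding u_def free_wave_coeff_dx_gauge_datum[OF \<phi>, folded b_def] w0[symmetric] by simp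
  qed
  moreover have "L2_norm (u t)
      \<le> sqrt (8 * pi * exp (SUP x. cmod (Jprim \<phi> x)) * (\<Sum>\<^sub>\<infinity>k. (cmod (fcoeff \<phi> k))\<^sup>2))" for t
  proof -
    have "L2_norm (u t) \<le> sqrt (32 * pi * (\<Sum>\<^sub>\<infinity>k. (cmod (coeff_dx b k))\<^sup>2))"
      unfolding u_def by (rule L2_norm_hopf_cole_le[OF b low])
    also have "\<dots> \<le> sqrt (8 * pi * exp (SUP x. cmod (Jprim \<phi> x)) * (\<Sum>\<^sub>\<infinity>k. (cmod (fcoeff \<phi> k))\<^sup>2))"
      using mult_left_mono[OF gauge_datum_coeff_dx_bound[OF \<phi>, folded b_def], of "32 * pi"]
      by (simp add: mult_ac)
    finally show ?thesis .
  qed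
  ultimately show ?thesis by blast
qed

lemma small_FL_data_global_solution:
  fixes \<phi> :: "real \<Rightarrow> complex"
  assumes \<phi>: "smooth \<phi>" "periodic2pi \<phi>" "mean_zero \<phi>"
    and l2: "(\<Sum>\<^sub>\<infinity>k. (cmod (fcoeff \<phi> k))\<^sup>2) \<le> K * (FL_norm s p \<phi>)\<^sup>2"
    and small: "sqrt inverse_square_sum * sqrt K * FL_norm s p \<phi> \<le> 1/8"
  shows "\<exists>u. smooth_global_solution u \<and> u 0 = \<phi> \<and>
    (\<forall>t. L2_norm (u t) \<le> sqrt (8 * pi * exp (SUP x. cmod (Jprim \<phi> x)) * K * (FL_norm s p \<phi>)\<^sup>2))"
proof -
  let ?M = "SUP x. cmod (Jprim \<phi> x)"
  let ?A = "\<Sum>\<^sub>\<infinity>k. (cmod (fcoeff \<phi> k))\<^sup>2"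
  have "FL_norm s p \<phi> \<ge> 0" unfolding FL_norm_def by simp
  then have "sqrt ?A \<le> sqrt K * FL_norm s p \<phi>"
    using real_sqrt_le_mono[OF l2] by (simp add: real_sqrt_mult)
  from mult_left_mono[OF this, of "sqrt inverse_square_sum"]
  have "sqrt inverse_square_sum * sqrt ?A \<le> 1/8"
    using small inverse_square_sum_nonneg by (simp add: mult.assoc)
  then obtain u where u: "smooth_global_solution u" "u 0 = \<phi>"
    "\<And>t. L2_norm (u t) \<le> sqrt (8 * pi * exp ?M * ?A)"
    using small_data_global_solution[OF \<phi>] by blast
  have "sqrt (8 * pi * exp ?M * ?A) \<le> sqrt (8 * pi * exp ?M * K * (FL_norm s p \<phi>)\<^sup>2)"
    using mult_left_mono[OF l2, of "8 * pi * exp ?M"] by (simp add: mult.assoc)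
  with u show ?thesis by (blast intro: order_trans)
qed

theorem corollary3p8:
  fixes s p :: real
  assumes "(s > 1/2 - 1/p \<and> p > 2) \<or> (s \<ge> 0 \<and> p = 2)"
  shows "\<exists>\<delta>2 > 0. \<exists>C :: real \<Rightarrow> real \<Rightarrow> real.
    \<forall>\<phi> :: real \<Rightarrow> complex.
      smooth \<phi> \<and> periodic2pi \<phi> \<and> mean_zero \<phi> \<and> FL_norm s p \<phi> \<le> \<delta>2 \<longrightarrow>
      (\<exists>u. smooth_global_solution u \<and> u 0 = \<phi> \<and>
        (\<forall>t. L2_norm (u t) \<le> C (SUP x. cmod (Jprim \<phi> x)) (FL_norm s p \<phi>)))"
proof -
  obtain K where "K \<ge> 0" and K: "\<And>a. rapid_decay a \<Longrightarrow> a 0 = 0 \<Longrightarrow>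
      (\<Sum>\<^sub>\<infinity>k. (cmod (a k))\<^sup>2) \<le> K * (FL_coeff_norm s p a)\<^sup>2"
    using l2_le_FL_coeff_norm[OF assms] by blast
  define c where "c = sqrt inverse_square_sum * sqrt K"
  have c0: "c \<ge> 0" unfolding c_def using \<open>K \<ge> 0\<close> inverse_square_sum_nonneg by simp
  show ?thesis
  proof (intro exI[of _ "1 / (8 * (c + 1))"] conjI exI[of _ "\<lambda>m n. sqrt (8 * pi * exp m * K * n\<^sup>2)"]
      allI impI)
    show "1 / (8 * (c + 1)) > 0" using c0 by simp
    fix \<phi> :: "real \<Rightarrow> complex"
    assume \<phi>: "smooth \<phi> \<and> periodic2pi \<phi> \<and> mean_zero \<phi> \<and> FL_norm s p \<phi> \<le> 1 / (8 * (c + 1))"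
    have l2: "(\<Sum>\<^sub>\<infinity>k. (cmod (fcoeff \<phi> k))\<^sup>2) \<le> K * (FL_norm s p \<phi>)\<^sup>2"
      using K[OF smooth_periodic_fourier_expansion(1)] \<phi> unfolding FL_norm_eq_FL_coeff_norm mean_zero_def by blast
    have "c * FL_norm s p \<phi> \<le> c * (1 / (8 * (c + 1)))" using \<phi> c0 by (intro mult_left_mono) auto
    also have "\<dots> = 1/8 * (c / (c + 1))" by simp
    also have "\<dots> \<le> 1/8" using c0 by simp
    finally have "c * FL_norm s p \<phi> \<le> 1/8" .
    with l2 show "\<exists>u. smooth_global_solution u \<and> u 0 = \<phi> \<and>
        (\<forall>t. L2_norm (u t) \<le> sqrt (8 * pi * exp (SUP x. cmod (Jprim \<phi> x)) * K * (FL_norm s p \<phi>)\<^sup>2))"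
      using small_FL_data_global_solution \<phi> unfolding c_def by blast
  qed
qed

end
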